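(* Every non-trivial weakly Cauchy sequence $(x_n)_n$ in $J$ admits a subsequence $(x_{n_k})_k$ which is equivalent to the unit vector basis of $J$ and whose closed linear span $[x_{n_k}]_k$ is complemented in $J$.
   Context: The James space $J$ is the space of real sequences $x=(x(n))_{n\in\mathbb N}$ with $\|x\|=\sup\big(\sum_{i=1}^m|\sum_{k\in I_i}x(k)|^2\big)^{1/2}<\infty$, the supremum taken over all $m$ and all pairwise disjoint finite intervals $I_1,\dots,I_m$ of $\mathbb N$; the unit vectors $(e_n)$ form a basis of $J$. A sequence $(x_n)$ in a Banach space $X$ is non-trivial weakly Cauchy if it converges weak$^*$ in $X^{**}$ to some $x^{**}\in X^{**}\setminus X$. *)

theory Defs
  imports "HOL-Analysis.Analysis"
begin

definition adm_intervals :: "nat set set \<Rightarrow> bool" where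
  "adm_intervals F \<longleftrightarrow> finite F \<and> (\<forall>I\<in>F. \<exists>a b. a \<le> b \<and> I = {a..b}) \<and> pairwise disjnt F"

definition jvar :: "(nat \<Rightarrow> real) \<Rightarrow> ereal" where
  "jvar x = (SUP F \<in> {F. adm_intervals F}. ereal (\<Sum>I\<in>F. (\<Sum>k\<in>I. x k)^2))"

definition James :: "(nat \<Rightarrow> real) set" where
  "James = {x. jvar x < \<infinity>}"

definition jnorm :: "(nat \<Rightarrow> real) \<Rightarrow> real" where
  "jnorm x = sqrt (real_of_ereal (jvar x))"

definition unitvec :: "nat \<Rightarrow> nat \<Rightarrow> real" where
  "unitvec n = (\<lambda>k. if k = n then 1 else 0)"

definition lincomb :: "(nat \<Rightarrow> real) \<Rightarrow> (nat \<Rightarrow> nat \<Rightarrow> real) \<Rightarrow> nat \<Rightarrow> nat \<Rightarrow> real" where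
  "lincomb a ys N = (\<lambda>i. \<Sum>k<N. a k * ys k i)"

definition jdual :: "((nat \<Rightarrow> real) \<Rightarrow> real) set" where
  "jdual = {f. (\<forall>x\<in>James. \<forall>y\<in>James. f (\<lambda>i. x i + y i) = f x + f y)
              \<and> (\<forall>c. \<forall>x\<in>James. f (\<lambda>i. c * x i) = c * f x)
              \<and> (\<exists>C. \<forall>x\<in>James. \<bar>f x\<bar> \<le> C * jnorm x)}"

definition dualnorm :: "((nat \<Rightarrow> real) \<Rightarrow> real) \<Rightarrow> real" where
  "dualnorm f = (SUP x \<in> {x\<in>James. jnorm x \<le> 1}. \<bar>f x\<bar>)"

definition jbidual :: "(((nat \<Rightarrow> real) \<Rightarrow> real) \<Rightarrow> real) set" where
  "jbidual = {\<phi>. (\<forall>f\<in>jdual. \<forall>g\<in>jdual. \<phi> (\<lambda>x. f x + g x) = \<phi> f + \<phi> g)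
              \<and> (\<forall>c. \<forall>f\<in>jdual. \<phi> (\<lambda>x. c * f x) = c * \<phi> f)
              \<and> (\<exists>C. \<forall>f\<in>jdual. \<bar>\<phi> f\<bar> \<le> C * dualnorm f)}"

(* non-trivial weakly Cauchy: weak* convergent in J^** to an element not in (the canonical image of) J *)
definition nontriv_weakly_cauchy :: "(nat \<Rightarrow> nat \<Rightarrow> real) \<Rightarrow> bool" where
  "nontriv_weakly_cauchy xs \<longleftrightarrow> (\<forall>n. xs n \<in> James) \<and>
     (\<exists>\<phi>\<in>jbidual. (\<forall>f\<in>jdual. (\<lambda>n. f (xs n)) \<longlonglongrightarrow> \<phi> f)
                   \<and> \<not> (\<exists>x\<in>James. \<forall>f\<in>jdual. \<phi> f = f x))"

definition equiv_unit_basis :: "(nat \<Rightarrow> nat \<Rightarrow> real) \<Rightarrow> bool" where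
  "equiv_unit_basis ys \<longleftrightarrow> (\<exists>C>0. \<forall>a N.
      jnorm (lincomb a unitvec N) \<le> C * jnorm (lincomb a ys N)
    \<and> jnorm (lincomb a ys N) \<le> C * jnorm (lincomb a unitvec N))"

definition closed_span :: "(nat \<Rightarrow> nat \<Rightarrow> real) \<Rightarrow> (nat \<Rightarrow> real) set" where
  "closed_span ys = {y\<in>James. \<forall>\<epsilon>>0. \<exists>a N. jnorm (\<lambda>i. y i - lincomb a ys N i) < \<epsilon>}"

definition complemented :: "(nat \<Rightarrow> real) set \<Rightarrow> bool" where
  "complemented S \<longleftrightarrow> (\<exists>P. (\<forall>x\<in>James. P x \<in> James)
     \<and> (\<forall>x\<in>James. \<forall>y\<in>James. P (\<lambda>i. x i + y i) = (\<lambda>i. P x i + P y i))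
     \<and> (\<forall>c. \<forall>x\<in>James. P (\<lambda>i. c * x i) = (\<lambda>i. c * P x i))
     \<and> (\<exists>C. \<forall>x\<in>James. jnorm (P x) \<le> C * jnorm x)
     \<and> (\<forall>x\<in>James. P (P x) = P x)
     \<and> P ` James = S)"

end

theory Submission
  imports Defs
begin

definition quad_var :: "(nat \<Rightarrow> real) \<Rightarrow> nat set set \<Rightarrow> real" where
  "quad_var x F = (\<Sum>I\<in>F. (sum x I)^2)"

lemma quad_var_nonneg: "0 \<le> quad_var x F"
  unfolding quad_var_def by (simp add: sum_nonneg)

lemma quad_var_le_jvar: "adm_intervals F \<Longrightarrow> ereal (quad_var x F) \<le> jvar x"
  unfolding jvar_def quad_var_def by (rule SUP_upper) auto

lemma jvar_le_if_quad_var_le: "(\<And>F. adm_intervals F \<Longrightarrow> quad_var x F \<le> B) \<Longrightarrow> jvar x \<le> ereal B"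
  unfolding jvar_def quad_var_def by (rule SUP_least) auto

lemma adm_intervals_memD: "adm_intervals F \<Longrightarrow> I \<in> F \<Longrightarrow> \<exists>a b. a \<le> b \<and> I = {a..b}"
  unfolding adm_intervals_def by blast
lemma adm_intervals_finite: "adm_intervals F \<Longrightarrow> finite F"
  unfolding adm_intervals_def by blast
lemma adm_intervals_disjoint: "adm_intervals F \<Longrightarrow> I \<in> F \<Longrightarrow> J \<in> F \<Longrightarrow> I \<noteq> J \<Longrightarrow> I \<inter> J = {}"
  unfolding adm_intervals_def pairwise_def disjnt_def by blast
lemma adm_intervals_mem_finite: "adm_intervals F \<Longrightarrow> I \<in> F \<Longrightarrow> finite I"
  using adm_intervals_memD by blast
lemma adm_intervals_mem_nonempty: "adm_intervals F \<Longrightarrow> I \<in> F \<Longrightarrow> I \<noteq> {}"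
  using adm_intervals_memD by fastforce

lemma adm_intervals_empty: "adm_intervals {}"
  unfolding adm_intervals_def by auto

lemma jvar_nonneg: "0 \<le> jvar x"
proof -
  have "ereal (quad_var x {}) \<le> jvar x" by (rule quad_var_le_jvar[OF adm_intervals_empty])
  thus ?thesis by (simp add: quad_var_def zero_ereal_def)
qed

lemma James_if_quad_var_bounded: "(\<And>F. adm_intervals F \<Longrightarrow> quad_var x F \<le> B) \<Longrightarrow> x \<in> James"
  unfolding James_def using jvar_le_if_quad_var_le[of x B] by (auto intro: le_less_trans)

lemma jvar_eq_jnorm_sq: assumes "x \<in> James" shows "jvar x = ereal ((jnorm x)^2)"
proof -
  have "jvar x < \<infinity>" using assms by (simp add: James_def)
  moreover have "0 \<le> jvar x" by (rule jvar_nonneg)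
  ultimately obtain r where r: "jvar x = ereal r" "0 \<le> r"
    by (cases "jvar x") auto
  thus ?thesis unfolding jnorm_def by (simp add: real_of_ereal_pos jvar_nonneg)
qed

lemma quad_var_le_jnorm_sq: "x \<in> James \<Longrightarrow> adm_intervals F \<Longrightarrow> quad_var x F \<le> (jnorm x)^2"
  using quad_var_le_jvar[of F x] jvar_eq_jnorm_sq[of x] by simp

lemma jnorm_nonneg: "0 \<le> jnorm x"
  unfolding jnorm_def by (simp add: real_of_ereal_pos jvar_nonneg)

lemma jnorm_le_if_quad_var_le: assumes "\<And>F. adm_intervals F \<Longrightarrow> quad_var x F \<le> B^2" "0 \<le> B"
  shows "jnorm x \<le> B"
proof -
  have "x \<in> James" using James_if_quad_var_bounded assms(1) by blast
  have "jvar x \<le> ereal (B^2)" using jvar_le_if_quad_var_le assms(1) by blast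
  hence "(jnorm x)^2 \<le> B^2" using jvar_eq_jnorm_sq[OF \<open>x \<in> James\<close>] by simp
  thus ?thesis using assms(2) jnorm_nonneg power2_le_imp_le by blast
qed

lemma jnorm_sq_le_if_quad_var_le:
  assumes "\<And>F. adm_intervals F \<Longrightarrow> quad_var x F \<le> B"
  shows "(jnorm x)^2 \<le> B"
proof -
  have "x \<in> James" using James_if_quad_var_bounded assms by blast
  then show ?thesis using jvar_le_if_quad_var_le[OF assms] jvar_eq_jnorm_sq by simp
qed

lemma sqrt_quad_var_le_jnorm: "x \<in> James \<Longrightarrow> adm_intervals F \<Longrightarrow> sqrt (quad_var x F) \<le> jnorm x"
  using quad_var_le_jnorm_sq[of x F] jnorm_nonneg[of x] real_le_rsqrt by (metis real_sqrt_le_mono real_sqrt_abs abs_of_nonneg)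

lemma sqrt_quad_var_eq_L2_set: "sqrt (quad_var x F) = L2_set (sum x) F"
  unfolding quad_var_def L2_set_def by simp


lemma sqrt_quad_var_add_le: "sqrt (quad_var (\<lambda>i. x i + y i) F) \<le> sqrt (quad_var x F) + sqrt (quad_var y F)"
  unfolding sqrt_quad_var_eq_L2_set sum.distrib by (rule L2_set_triangle_ineq)

lemma quad_var_scale: "quad_var (\<lambda>i. c * x i) F = c^2 * quad_var x F"
  by (simp add: quad_var_def sum_distrib_left[symmetric] power_mult_distrib)

lemma James_add: assumes "x \<in> James" "y \<in> James"
  shows "(\<lambda>i. x i + y i) \<in> James" "jnorm (\<lambda>i. x i + y i) \<le> jnorm x + jnorm y"
proof -
  have *: "quad_var (\<lambda>i. x i + y i) F \<le> (jnorm x + jnorm y)^2" if "adm_intervals F" for F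
  proof -
    have "sqrt (quad_var (\<lambda>i. x i + y i) F) \<le> jnorm x + jnorm y"
      using sqrt_quad_var_add_le[of x y F] sqrt_quad_var_le_jnorm[OF assms(1) that] sqrt_quad_var_le_jnorm[OF assms(2) that] by linarith
    moreover have "0 \<le> jnorm x + jnorm y" using jnorm_nonneg by (simp add: add_nonneg_nonneg)
    ultimately show ?thesis
      by (metis quad_var_nonneg real_sqrt_le_iff real_sqrt_pow2 sqrt_le_D)
  qed
  show "(\<lambda>i. x i + y i) \<in> James" using James_if_quad_var_bounded * by blast
  show "jnorm (\<lambda>i. x i + y i) \<le> jnorm x + jnorm y"
    using jnorm_le_if_quad_var_le[OF *] jnorm_nonneg by (simp add: add_nonneg_nonneg)
qed

lemma James_scale_le: assumes "x \<in> James"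
  shows "(\<lambda>i. c * x i) \<in> James" "jnorm (\<lambda>i. c * x i) \<le> \<bar>c\<bar> * jnorm x"
proof -
  have *: "quad_var (\<lambda>i. c * x i) F \<le> (\<bar>c\<bar> * jnorm x)^2" if "adm_intervals F" for F
    using quad_var_le_jnorm_sq[OF assms that] unfolding quad_var_scale power_mult_distrib
    by (simp add: mult_left_mono)
  show "(\<lambda>i. c * x i) \<in> James" using James_if_quad_var_bounded * by blast
  show "jnorm (\<lambda>i. c * x i) \<le> \<bar>c\<bar> * jnorm x"
    using jnorm_le_if_quad_var_le[OF *] jnorm_nonneg by simp
qed

lemma jnorm_scale: assumes "x \<in> James"
  shows "jnorm (\<lambda>i. c * x i) = \<bar>c\<bar> * jnorm x"
proof (cases "c = 0")
  case True
  have "jnorm (\<lambda>i. 0) \<le> 0" by (rule jnorm_le_if_quad_var_le) (auto simp: quad_var_def)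
  thus ?thesis using True jnorm_nonneg[of "\<lambda>i. 0"] by simp
next
  case False
  have a: "jnorm (\<lambda>i. c * x i) \<le> \<bar>c\<bar> * jnorm x" by (rule James_scale_le[OF assms])
  have "jnorm (\<lambda>i. (1/c) * (c * x i)) \<le> \<bar>1/c\<bar> * jnorm (\<lambda>i. c * x i)"
    by (rule James_scale_le(2)[OF James_scale_le(1)[OF assms]])
  hence "jnorm x \<le> \<bar>1/c\<bar> * jnorm (\<lambda>i. c * x i)" using False by simp
  hence "\<bar>c\<bar> * jnorm x \<le> jnorm (\<lambda>i. c * x i)" using False
    by (simp add: field_simps)
  thus ?thesis using a by simp
qed

lemma zero_in_James: "(\<lambda>i. 0) \<in> James"
  by (rule James_if_quad_var_bounded[of _ 0]) (simp add: quad_var_def)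

lemma adm_intervals_singleton: "adm_intervals {{a..b}}" if "a \<le> b"
  using that unfolding adm_intervals_def by auto

lemma abs_interval_sum_le_jnorm: assumes "x \<in> James" "a \<le> b"
  shows "\<bar>sum x {a..b}\<bar> \<le> jnorm x"
proof -
  have "sqrt (quad_var x {{a..b}}) \<le> jnorm x" by (rule sqrt_quad_var_le_jnorm[OF assms(1) adm_intervals_singleton[OF assms(2)]])
  thus ?thesis by (simp add: quad_var_def)
qed

lemma abs_coord_le_jnorm: assumes "x \<in> James" shows "\<bar>x k\<bar> \<le> jnorm x"
  using abs_interval_sum_le_jnorm[OF assms, of k k] by simp

lemma jnorm_zero_iff: assumes "x \<in> James" shows "jnorm x = 0 \<longleftrightarrow> x = (\<lambda>i. 0)"
proof
  assume "jnorm x = 0" thus "x = (\<lambda>i. 0)" using abs_coord_le_jnorm[OF assms] by (intro ext) (metis abs_le_zero_iff)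
next
  assume "x = (\<lambda>i. 0)"
  hence "jnorm x \<le> 0" by (intro jnorm_le_if_quad_var_le) (auto simp: quad_var_def)
  thus "jnorm x = 0" using jnorm_nonneg[of x] by simp
qed

typedef james = James
  morphisms Rep_james Abs_james
  using zero_in_James by blast

setup_lifting type_definition_james

lemma James_uminus: "x \<in> James \<Longrightarrow> (\<lambda>i. - x i) \<in> James"
  using James_scale_le(1)[of x "-1"] by simp
lemma James_diff: "x \<in> James \<Longrightarrow> y \<in> James \<Longrightarrow> (\<lambda>i. x i - y i) \<in> James"
  using James_add(1)[of x "\<lambda>i. - y i"] James_uminus[of y] by simp

instantiation james :: real_normed_vector
begin
lift_definition zero_james :: james is "\<lambda>i. 0" by (rule zero_in_James)
lift_definition plus_james :: "james \<Rightarrow> james \<Rightarrow> james" is "\<lambda>x y i. x i + y i" by (rule James_add(1))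
lift_definition uminus_james :: "james \<Rightarrow> james" is "\<lambda>x i. - x i" by (rule James_uminus)
lift_definition minus_james :: "james \<Rightarrow> james \<Rightarrow> james" is "\<lambda>x y i. x i - y i" by (rule James_diff)
lift_definition scaleR_james :: "real \<Rightarrow> james \<Rightarrow> james" is "\<lambda>c x i. c * x i" by (rule James_scale_le(1))
lift_definition norm_james :: "james \<Rightarrow> real" is "jnorm" .
definition sgn_james :: "james \<Rightarrow> james" where "sgn_james x = scaleR (inverse (norm x)) x"
definition dist_james :: "james \<Rightarrow> james \<Rightarrow> real" where "dist_james x y = norm (x - y)"
definition uniformity_james :: "(james \<times> james) filter" where
  "uniformity_james = (INF e\<in>{0<..}. principal {(x, y). dist x y < e})"
definition open_james :: "james set \<Rightarrow> bool" where
  "open_james U = (\<forall>x\<in>U. \<forall>\<^sub>F (x', y) in uniformity. x' = x \<longrightarrow> y \<in> U)"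
instance
proof
  fix a b c :: james and r s :: real
  show "a + b + c = a + (b + c)" by transfer (simp add: algebra_simps)
  show "a + b = b + a" by transfer (simp add: algebra_simps)
  show "0 + a = a" by transfer simp
  show "- a + a = 0" by transfer simp
  show "a - b = a + - b" by transfer simp
  show "r *\<^sub>R (a + b) = r *\<^sub>R a + r *\<^sub>R b" by transfer (simp add: algebra_simps)
  show "(r + s) *\<^sub>R a = r *\<^sub>R a + s *\<^sub>R a" by transfer (simp add: algebra_simps)
  show "r *\<^sub>R s *\<^sub>R a = (r * s) *\<^sub>R a" by transfer (simp add: algebra_simps)
  show "1 *\<^sub>R a = a" by transfer simp
  show "(norm a = 0) = (a = 0)" by transfer (simp add: jnorm_zero_iff)
  show "norm (a + b) \<le> norm a + norm b" by transfer (rule James_add(2))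
  show "norm (r *\<^sub>R a) = \<bar>r\<bar> * norm a" by transfer (rule jnorm_scale)
  show "sgn a = inverse (norm a) *\<^sub>R a" by (simp add: sgn_james_def)
  show "dist a b = norm (a - b)" by (simp add: dist_james_def)
  show "uniformity = (INF e\<in>{0<..}. principal {(x, y). dist (x::james) y < e})" by (simp add: uniformity_james_def)
  fix U :: "james set"
  show "open U = (\<forall>x\<in>U. \<forall>\<^sub>F (x', y) in uniformity. x' = x \<longrightarrow> y \<in> U)" by (simp add: open_james_def)
qed
end

lemma Rep_james_zero[simp]: "Rep_james 0 = (\<lambda>i. 0)" by transfer simp
lemma Rep_james_add: "Rep_james (x + y) = (\<lambda>i. Rep_james x i + Rep_james y i)" by transfer simp
lemma Rep_james_diff: "Rep_james (x - y) = (\<lambda>i. Rep_james x i - Rep_james y i)" by transfer simp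
lemma Rep_james_uminus: "Rep_james (- x) = (\<lambda>i. - Rep_james x i)" by transfer simp
lemma Rep_james_scaleR: "Rep_james (r *\<^sub>R x) = (\<lambda>i. r * Rep_james x i)" by transfer simp
lemma norm_james_eq: "norm x = jnorm (Rep_james x)" by transfer simp
lemma Rep_james_in_James: "Rep_james x \<in> James" by (rule Rep_james)
lemma Rep_james_add_apply[simp]: "Rep_james (x + y) i = Rep_james x i + Rep_james y i" by (simp add: Rep_james_add)
lemma Rep_james_diff_apply[simp]: "Rep_james (x - y) i = Rep_james x i - Rep_james y i" by (simp add: Rep_james_diff)
lemma Rep_james_uminus_apply[simp]: "Rep_james (- x) i = - Rep_james x i" by (simp add: Rep_james_uminus)
lemma Rep_james_scaleR_apply[simp]: "Rep_james (r *\<^sub>R x) i = r * Rep_james x i" by (simp add: Rep_james_scaleR)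
lemma Rep_james_sum_apply[simp]: "Rep_james (\<Sum>j\<in>A. f j) i = (\<Sum>j\<in>A. Rep_james (f j) i)"
  by (induction A rule: infinite_finite_induct) auto
lemma Rep_james_sum: "Rep_james (\<Sum>j\<in>A. f j) = (\<lambda>i. \<Sum>j\<in>A. Rep_james (f j) i)"
  by auto

lemma abs_coord_le_norm: "\<bar>Rep_james x k\<bar> \<le> norm x"
  by (simp add: norm_james_eq abs_coord_le_jnorm Rep_james_in_James)

lemma sqrt_quad_var_le_norm: "adm_intervals F \<Longrightarrow> sqrt (quad_var (Rep_james x) F) \<le> norm x"
  by (simp add: norm_james_eq sqrt_quad_var_le_jnorm Rep_james_in_James)

lemma norm_le_if_quad_var_le: "(\<And>F. adm_intervals F \<Longrightarrow> quad_var (Rep_james x) F \<le> B^2) \<Longrightarrow> 0 \<le> B \<Longrightarrow> norm x \<le> B"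
  by (simp add: norm_james_eq jnorm_le_if_quad_var_le)

lemma abs_interval_sum_le_norm: "a \<le> b \<Longrightarrow> \<bar>sum (Rep_james x) {a..b}\<bar> \<le> norm x"
  by (simp add: norm_james_eq abs_interval_sum_le_jnorm Rep_james_in_James)

lemma bounded_linear_coord: "bounded_linear (\<lambda>x. Rep_james x k)"
  by (rule bounded_linear_intro[where K=1]) (auto simp: abs_coord_le_norm)

lemma james_eqI: "(\<And>i. Rep_james x i = Rep_james y i) \<Longrightarrow> x = y"
  using Rep_james_inject by (metis ext)

lemma Abs_james_add: "x \<in> James \<Longrightarrow> y \<in> James \<Longrightarrow> Abs_james (\<lambda>i. x i + y i) = Abs_james x + Abs_james y"
  by (rule james_eqI) (simp add: Abs_james_inverse James_add(1))

lemma Abs_james_scaleR: "x \<in> James \<Longrightarrow> Abs_james (\<lambda>i. c * x i) = c *\<^sub>R Abs_james x"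
  by (rule james_eqI) (simp add: Abs_james_inverse James_scale_le(1))

lemma quad_var_tendsto:
  assumes "\<And>k. (\<lambda>m. X m k) \<longlonglongrightarrow> z k" "adm_intervals F"
  shows "(\<lambda>m. quad_var (X m) F) \<longlonglongrightarrow> quad_var z F"
  unfolding quad_var_def using assms adm_intervals_finite adm_intervals_mem_finite
  by (auto intro!: tendsto_intros tendsto_sum)

lemma James_coordinatewise_limit:
  assumes lim: "\<And>k. (\<lambda>n. x n k) \<longlonglongrightarrow> z k"
    and J: "\<And>n. x n \<in> James"
    and bound: "eventually (\<lambda>n. jnorm (x n) \<le> B) sequentially"
  shows "z \<in> James" "jnorm z \<le> B"
proof -
  have B: "0 \<le> B"
  proof -
    obtain N where "\<forall>n\<ge>N. jnorm (x n) \<le> B" using bound by (auto simp: eventually_sequentially)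
    then show ?thesis using jnorm_nonneg[of "x N"] by auto
  qed
  have *: "quad_var z F \<le> B^2" if F: "adm_intervals F" for F
  proof (rule tendsto_upperbound[OF quad_var_tendsto[OF lim F]])
    show "eventually (\<lambda>n. quad_var (x n) F \<le> B^2) sequentially"
      using bound
    proof eventually_elim
      case (elim n)
      then show ?case
        using quad_var_le_jnorm_sq[OF J F] power_mono[OF elim jnorm_nonneg] order_trans by blast
    qed
  qed simp
  show "z \<in> James" using James_if_quad_var_bounded * by blast
  show "jnorm z \<le> B" using jnorm_le_if_quad_var_le[OF * B] .
qed

instance james :: banach
proof
  fix X :: "nat \<Rightarrow> james" assume "Cauchy X"
  define z where "z k = lim (\<lambda>m. Rep_james (X m) k)" for k
  have z: "(\<lambda>m. Rep_james (X m) k) \<longlonglongrightarrow> z k" for k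
    using bounded_linear.Cauchy[OF bounded_linear_coord \<open>Cauchy X\<close>, of k]
    unfolding z_def Cauchy_convergent_iff convergent_LIMSEQ_iff .
  have close: "\<exists>M. \<forall>m\<ge>M. (\<lambda>i. Rep_james (X m) i - z i) \<in> James \<and> jnorm (\<lambda>i. Rep_james (X m) i - z i) \<le> e"
    if e: "0 < e" for e
  proof -
    obtain M where M: "\<forall>m\<ge>M. \<forall>n\<ge>M. norm (X m - X n) < e"
      using metric_CauchyD[OF \<open>Cauchy X\<close> e] by (auto simp: dist_norm)
    have "(\<lambda>i. Rep_james (X m) i - z i) \<in> James \<and> jnorm (\<lambda>i. Rep_james (X m) i - z i) \<le> e"
      if "M \<le> m" for m
    proof -
      have lim: "(\<lambda>n. Rep_james (X m - X n) k) \<longlonglongrightarrow> (\<lambda>i. Rep_james (X m) i - z i) k" for k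
        unfolding Rep_james_diff_apply by (intro tendsto_diff tendsto_const z)
      have ev: "eventually (\<lambda>n. jnorm (Rep_james (X m - X n)) \<le> e) sequentially"
        unfolding eventually_sequentially norm_james_eq[symmetric] using M that less_imp_le by blast
      show ?thesis using James_coordinatewise_limit[OF lim Rep_james_in_James ev] by blast
    qed
    then show ?thesis by blast
  qed
  obtain M where "(\<lambda>i. Rep_james (X M) i - z i) \<in> James" using close[of 1] by auto
  hence zJ: "z \<in> James"
    using James_diff[OF Rep_james_in_James[of "X M"], of "\<lambda>i. Rep_james (X M) i - z i"] by simp
  have "X \<longlonglongrightarrow> Abs_james z"
  proof (rule LIMSEQ_I)
    fix e :: real assume "0 < e"
    then obtain M where M: "\<forall>m\<ge>M. jnorm (\<lambda>i. Rep_james (X m) i - z i) \<le> e/2"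
      using close[of "e/2"] by auto
    have "norm (X m - Abs_james z) < e" if "M \<le> m" for m
    proof -
      have "jnorm (\<lambda>i. Rep_james (X m) i - z i) \<le> e/2" using M that by blast
      then show ?thesis using \<open>0 < e\<close> by (simp add: norm_james_eq Rep_james_diff Abs_james_inverse zJ)
    qed
    then show "\<exists>M. \<forall>m\<ge>M. norm (X m - Abs_james z) < e" by blast
  qed
  thus "convergent X" by (rule convergentI)
qed

definition nat_convex :: "nat set \<Rightarrow> bool" where
  "nat_convex A \<longleftrightarrow> (\<forall>x y z. x \<in> A \<longrightarrow> z \<in> A \<longrightarrow> x \<le> y \<longrightarrow> y \<le> z \<longrightarrow> y \<in> A)"

lemma nat_convex_finite_imp_interval:
  assumes "finite A" "nat_convex A" "A \<noteq> {}"
  shows "\<exists>a b. a \<le> b \<and> A = {a..b}"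
proof (intro exI conjI)
  show "A = {Min A..Max A}"
  proof
    show "A \<subseteq> {Min A..Max A}" using assms(1) by auto
    have "Min A \<in> A" "Max A \<in> A" using assms(1,3) by auto
    then show "{Min A..Max A} \<subseteq> A"
      using assms(2) unfolding nat_convex_def by (meson atLeastAtMost_iff subsetI)
  qed
qed (use assms(1,3) in simp)

lemma nat_convex_atLeastAtMost: "nat_convex {a..b}" unfolding nat_convex_def by auto
lemma nat_convex_Int: "nat_convex A \<Longrightarrow> nat_convex B \<Longrightarrow> nat_convex (A \<inter> B)" unfolding nat_convex_def by blast
lemma nat_convex_atLeast: "nat_convex {a..}" unfolding nat_convex_def by auto
lemma nat_convex_lessThan: "nat_convex {..<a}" unfolding nat_convex_def by auto
lemma nat_convex_atLeastLessThan: "nat_convex {a..<b}" unfolding nat_convex_def by auto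

lemma adm_intervals_mem_convex: "adm_intervals F \<Longrightarrow> I \<in> F \<Longrightarrow> nat_convex I"
  using adm_intervals_memD nat_convex_atLeastAtMost by metis

lemma adm_intervals_image:
  assumes F: "adm_intervals F"
    and G: "\<forall>I\<in>F. finite (G I) \<and> nat_convex (G I)"
    and disj: "\<forall>I\<in>F. \<forall>I'\<in>F. I \<noteq> I' \<longrightarrow> G I \<inter> G I' = {}"
  shows "adm_intervals (G ` F - {{}})" "quad_var x (G ` F - {{}}) = (\<Sum>I\<in>F. (sum x (G I))^2)"
proof -
  show "adm_intervals (G ` F - {{}})"
    unfolding adm_intervals_def
  proof (intro conjI ballI)
    show "finite (G ` F - {{}})" using adm_intervals_finite[OF F] by simp
    show "\<exists>a b. a \<le> b \<and> J = {a..b}" if J: "J \<in> G ` F - {{}}" for J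
    proof -
      obtain I where "I \<in> F" "J = G I" "J \<noteq> {}" using J by blast
      then show ?thesis using G nat_convex_finite_imp_interval[of J] by simp
    qed
    show "pairwise disjnt (G ` F - {{}})"
    proof (rule pairwiseI)
      fix J J' assume "J \<in> G ` F - {{}}" "J' \<in> G ` F - {{}}" "J \<noteq> J'"
      then obtain I I' where "I \<in> F" "I' \<in> F" "J = G I" "J' = G I'" by blast
      moreover from this \<open>J \<noteq> J'\<close> have "I \<noteq> I'" by metis
      ultimately show "disjnt J J'" using disj by (simp add: disjnt_def)
    qed
  qed
  have "(\<Sum>I\<in>F. (sum x (G I))^2) = (\<Sum>I\<in>{I\<in>F. G I \<noteq> {}}. (sum x (G I))^2)"
    using adm_intervals_finite[OF F] by (intro sum.mono_neutral_right) auto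
  also have "\<dots> = (\<Sum>J\<in>G ` {I\<in>F. G I \<noteq> {}}. (sum x J)^2)"
  proof (rule sum.reindex_cong[symmetric, OF _ refl refl])
    show "inj_on G {I\<in>F. G I \<noteq> {}}"
    proof (rule inj_onI)
      fix I I' assume "I \<in> {I\<in>F. G I \<noteq> {}}" "I' \<in> {I\<in>F. G I \<noteq> {}}" "G I = G I'"
      then show "I = I'" using disj[rule_format, of I I'] by auto
    qed
  qed
  also have "G ` {I\<in>F. G I \<noteq> {}} = G ` F - {{}}" by auto
  finally show "quad_var x (G ` F - {{}}) = (\<Sum>I\<in>F. (sum x (G I))^2)"
    by (simp add: quad_var_def)
qed

lemma quad_var_image_le:
  assumes "z \<in> James" "adm_intervals F" "\<forall>I\<in>F. finite (G I) \<and> nat_convex (G I)"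
    "\<forall>I\<in>F. \<forall>I'\<in>F. I \<noteq> I' \<longrightarrow> G I \<inter> G I' = {}"
  shows "(\<Sum>I\<in>F. (sum z (G I))^2) \<le> (jnorm z)^2"
  using quad_var_le_jnorm_sq[OF assms(1) adm_intervals_image(1)[OF assms(2-4)]]
  by (simp add: adm_intervals_image(2)[OF assms(2-4)])

definition zero_outside :: "nat set \<Rightarrow> (nat \<Rightarrow> real) \<Rightarrow> nat \<Rightarrow> real" where
  "zero_outside A x = (\<lambda>k. if k \<in> A then x k else 0)"

lemma quad_var_zero_outside:
  assumes "nat_convex A" "adm_intervals F"
  shows "adm_intervals ((\<lambda>I. I \<inter> A) ` F - {{}})"
    "quad_var (zero_outside A x) F = quad_var x ((\<lambda>I. I \<inter> A) ` F - {{}})"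
proof -
  have G: "\<forall>I\<in>F. finite (I \<inter> A) \<and> nat_convex (I \<inter> A)"
    by (simp add: adm_intervals_mem_finite[OF assms(2)] adm_intervals_mem_convex[OF assms(2)] nat_convex_Int assms(1))
  have disj: "\<forall>I\<in>F. \<forall>I'\<in>F. I \<noteq> I' \<longrightarrow> I \<inter> A \<inter> (I' \<inter> A) = {}"
    using adm_intervals_disjoint[OF assms(2)] by blast
  show "adm_intervals ((\<lambda>I. I \<inter> A) ` F - {{}})" by (rule adm_intervals_image(1)[OF assms(2) G disj])
  have "quad_var (zero_outside A x) F = (\<Sum>I\<in>F. (sum x (I \<inter> A))^2)"
    unfolding quad_var_def using adm_intervals_mem_finite[OF assms(2)]
    by (intro sum.cong) (simp_all add: zero_outside_def sum.inter_restrict)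
  then show "quad_var (zero_outside A x) F = quad_var x ((\<lambda>I. I \<inter> A) ` F - {{}})"
    using adm_intervals_image(2)[OF assms(2) G disj] by simp
qed

lemma zero_outside_James:
  assumes "x \<in> James" "nat_convex A"
  shows "zero_outside A x \<in> James" "jnorm (zero_outside A x) \<le> jnorm x"
proof -
  have *: "quad_var (zero_outside A x) F \<le> (jnorm x)^2" if "adm_intervals F" for F
    using quad_var_zero_outside[OF assms(2) that] quad_var_le_jnorm_sq[OF assms(1)] by simp
  show "zero_outside A x \<in> James" using James_if_quad_var_bounded * by blast
  show "jnorm (zero_outside A x) \<le> jnorm x" using jnorm_le_if_quad_var_le[OF *] jnorm_nonneg by blast
qed

lemma quad_var_near_jnorm_sq:
  assumes "x \<in> James" "0 < e"
  shows "\<exists>F. adm_intervals F \<and> (jnorm x)^2 - e < quad_var x F"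
proof (rule ccontr)
  assume "\<not> ?thesis"
  hence "\<And>F. adm_intervals F \<Longrightarrow> quad_var x F \<le> (jnorm x)^2 - e" by force
  hence "jvar x \<le> ereal ((jnorm x)^2 - e)" by (rule jvar_le_if_quad_var_le)
  thus False using jvar_eq_jnorm_sq[OF assms(1)] assms(2) by simp
qed

lemma adm_intervals_Un:
  assumes F: "adm_intervals F" and G: "adm_intervals G" and disj: "\<forall>I\<in>F. \<forall>J\<in>G. I \<inter> J = {}"
  shows "adm_intervals (F \<union> G)" "quad_var x (F \<union> G) = quad_var x F + quad_var x G"
proof -
  show "adm_intervals (F \<union> G)"
    unfolding adm_intervals_def
  proof (intro conjI)
    show "finite (F \<union> G)" using adm_intervals_finite F G by blast
    show "\<forall>I\<in>F \<union> G. \<exists>a b. a \<le> b \<and> I = {a..b}"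
      using adm_intervals_memD[OF F] adm_intervals_memD[OF G] by blast
    show "pairwise disjnt (F \<union> G)"
    proof (rule pairwiseI)
      fix I J assume "I \<in> F \<union> G" "J \<in> F \<union> G" "I \<noteq> J"
      then show "disjnt I J"
        unfolding disjnt_def using adm_intervals_disjoint[OF F] adm_intervals_disjoint[OF G] disj
        by (metis Int_commute Un_iff)
    qed
  qed
  have "F \<inter> G = {}"
  proof (rule ccontr)
    assume "F \<inter> G \<noteq> {}"
    then obtain I where "I \<in> F" "I \<in> G" by blast
    then show False using disj adm_intervals_mem_nonempty[OF G \<open>I \<in> G\<close>] by auto
  qed
  then show "quad_var x (F \<union> G) = quad_var x F + quad_var x G"
    unfolding quad_var_def using adm_intervals_finite[OF F] adm_intervals_finite[OF G]
    by (rule sum.union_disjoint[rotated 2])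
qed

text \<open>Tails are small: choose \<open>F\<close> nearly attaining the norm; any admissible family
  living beyond the intervals of \<open>F\<close> can be added to \<open>F\<close>.\<close>

lemma tail_jnorm_small:
  assumes "x \<in> James" "0 < e"
  shows "\<exists>p. \<forall>q\<ge>p. jnorm (zero_outside {q..} x) \<le> e"
proof -
  obtain F where F: "adm_intervals F" "(jnorm x)^2 - e^2 < quad_var x F"
    using quad_var_near_jnorm_sq[OF assms(1), of "e^2"] assms(2) by auto
  have finU: "finite (\<Union>F)"
    using adm_intervals_finite[OF F(1)] adm_intervals_mem_finite[OF F(1)] by blast
  obtain p where p: "\<And>k. k \<in> \<Union>F \<Longrightarrow> k < p"
    using finite_nat_bounded[OF finU] by (auto simp: lessThan_iff subset_eq)
  have "jnorm (zero_outside {q..} x) \<le> e" if q: "p \<le> q" for q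
  proof (rule jnorm_le_if_quad_var_le)
    fix G assume G: "adm_intervals G"
    let ?G' = "(\<lambda>I. I \<inter> {q..}) ` G - {{}}"
    note G' = quad_var_zero_outside[OF nat_convex_atLeast[of q] G]
    have disj: "\<forall>I\<in>F. \<forall>J\<in>?G'. I \<inter> J = {}"
    proof (intro ballI)
      fix I J assume "I \<in> F" "J \<in> ?G'"
      then have "\<forall>k\<in>I. k < p" "\<forall>k\<in>J. q \<le> k" using p by auto
      then show "I \<inter> J = {}" using q by (meson disjoint_iff leD le_trans)
    qed
    have U: "adm_intervals (F \<union> ?G')" "quad_var x (F \<union> ?G') = quad_var x F + quad_var x ?G'"
      by (rule adm_intervals_Un[OF F(1) G'(1) disj])+
    have "quad_var x F + quad_var x ?G' \<le> (jnorm x)^2"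
      using quad_var_le_jnorm_sq[OF assms(1) U(1)] U(2) by simp
    then show "quad_var (zero_outside {q..} x) G \<le> e^2" using G'(2)[of x] F(2) by linarith
  qed (use assms(2) in simp)
  then show ?thesis by blast
qed

lemma sum_unitvec: "finite I \<Longrightarrow> sum (unitvec k) I = (if k \<in> I then 1 else 0)"
  unfolding unitvec_def by simp

lemma unitvec_James: "unitvec k \<in> James" "jnorm (unitvec k) \<le> 1"
proof -
  have *: "quad_var (unitvec k) F \<le> 1^2" if F: "adm_intervals F" for F
  proof -
    have "quad_var (unitvec k) F = (\<Sum>I\<in>F. if k \<in> I then 1 else 0)"
      unfolding quad_var_def using adm_intervals_mem_finite[OF F] by (intro sum.cong) (auto simp: sum_unitvec)
    also have "\<dots> = real (card {I\<in>F. k \<in> I})"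
      using adm_intervals_finite[OF F] by (simp add: sum.If_cases Int_def)
    also have "card {I\<in>F. k \<in> I} \<le> Suc 0"
      using adm_intervals_disjoint[OF F] by (subst card_le_Suc0_iff_eq) (auto simp: adm_intervals_finite[OF F])
    finally show ?thesis by simp
  qed
  show "unitvec k \<in> James" using James_if_quad_var_bounded * by blast
  show "jnorm (unitvec k) \<le> 1" using jnorm_le_if_quad_var_le[OF *] by simp
qed

definition basis_vec :: "nat \<Rightarrow> james" where "basis_vec k = Abs_james (unitvec k)"

lemma Rep_basis_vec: "Rep_james (basis_vec k) = unitvec k"
  unfolding basis_vec_def using unitvec_James(1) by (simp add: Abs_james_inverse)

lemma norm_basis_vec_le: "norm (basis_vec k) \<le> 1"
  using unitvec_James(2) by (simp add: norm_james_eq Rep_basis_vec)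

lemma finite_support_eq_sum_basis:
  assumes "finite S" "\<And>k. k \<notin> S \<Longrightarrow> x k = 0"
  shows "Rep_james (\<Sum>k\<in>S. x k *\<^sub>R basis_vec k) = x"
proof
  fix i
  have "Rep_james (\<Sum>k\<in>S. x k *\<^sub>R basis_vec k) i = (\<Sum>k\<in>S. x k * unitvec k i)"
    by (simp add: Rep_basis_vec)
  also have "\<dots> = (if i \<in> S then x i else 0)"
    unfolding unitvec_def using assms(1) by (simp add: if_distrib cong: if_cong)
  finally show "Rep_james (\<Sum>k\<in>S. x k *\<^sub>R basis_vec k) i = x i" using assms(2) by auto
qed

lemma finite_support_James:
  assumes "finite S" "\<And>k. k \<notin> S \<Longrightarrow> x k = 0"
  shows "x \<in> James"
  using Rep_james_in_James[of "\<Sum>k\<in>S. x k *\<^sub>R basis_vec k"] finite_support_eq_sum_basis[OF assms]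
  by simp

lemma norm_le_sum_abs_finite_support:
  assumes "finite S" "\<And>k. k \<notin> S \<Longrightarrow> Rep_james x k = 0"
  shows "norm x \<le> (\<Sum>k\<in>S. \<bar>Rep_james x k\<bar>)"
proof -
  have "x = (\<Sum>k\<in>S. Rep_james x k *\<^sub>R basis_vec k)"
    using finite_support_eq_sum_basis[OF assms] by (simp add: Rep_james_inject[symmetric])
  also have "norm \<dots> \<le> (\<Sum>k\<in>S. norm (Rep_james x k *\<^sub>R basis_vec k))"
    by (rule norm_sum)
  also have "\<dots> \<le> (\<Sum>k\<in>S. \<bar>Rep_james x k\<bar>)"
    using norm_basis_vec_le by (intro sum_mono) (simp add: mult_left_le)
  finally show ?thesis .
qed

definition trunc :: "nat \<Rightarrow> (nat \<Rightarrow> real) \<Rightarrow> nat \<Rightarrow> real" where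
  "trunc N a = (\<lambda>i. if i < N then a i else 0)"

lemma trunc_James: "trunc N a \<in> James"
  by (rule finite_support_James[of "{..<N}"]) (auto simp: trunc_def)

section \<open>Blocks\<close>

definition block :: "(nat \<Rightarrow> nat) \<Rightarrow> nat \<Rightarrow> nat set" where
  "block p j = {p j..<p (Suc j)}"

lemma nat_convex_block: "nat_convex (block p j)"
  by (simp add: block_def nat_convex_atLeastLessThan)

lemma block_disjoint:
  assumes "strict_mono p" "m \<in> block p i" "m \<in> block p i'" shows "i = i'"
proof (rule ccontr)
  assume "i \<noteq> i'"
  then have "Suc i \<le> i' \<or> Suc i' \<le> i" by arith
  then have "p (Suc i) \<le> p i' \<or> p (Suc i') \<le> p i"
    by (simp add: strict_mono_less_eq[OF assms(1)])
  then show False using assms(2,3) by (auto simp: block_def)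
qed

lemma start_in_block: "strict_mono p \<Longrightarrow> p j \<in> block p j"
  unfolding block_def by (simp add: strict_mono_def)

lemma block_subset_atLeastAtMost_iff:
  "strict_mono p \<Longrightarrow> block p i \<subseteq> {a..b} \<longleftrightarrow> a \<le> p i \<and> p (Suc i) \<le> Suc b"
  using strict_mono_less_eq[of p "Suc i" i]
  by (simp add: block_def ivl_subset atLeastLessThanSuc_atLeastAtMost[symmetric])

lemma sum_blocks:
  fixes p :: "nat \<Rightarrow> nat"
  assumes "mono p" "s \<le> t"
  shows "(\<Sum>j\<in>{s..<t}. sum f (block p j)) = sum f {p s..<p t}"
  using assms(2)
proof (induction t rule: dec_induct)
  case (step t)
  have "p s \<le> p t" "p t \<le> p (Suc t)" using assms(1) step.hyps by (auto simp: mono_def)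
  then have "sum f {p s..<p (Suc t)} = sum f {p s..<p t} + sum f (block p t)"
    unfolding block_def by (rule sum.atLeastLessThan_concat[symmetric])
  with step.IH step.hyps show ?case by simp
qed simp

lemma block_sums_James:
  assumes p: "strict_mono p" and x: "x \<in> James"
  shows "(\<lambda>j. sum x (block p j)) \<in> James" "jnorm (\<lambda>j. sum x (block p j)) \<le> jnorm x"
proof -
  let ?G = "\<lambda>J. {p (Min J)..<p (Suc (Max J))}"
  have *: "quad_var (\<lambda>j. sum x (block p j)) F \<le> (jnorm x)^2" if F: "adm_intervals F" for F
  proof -
    have G: "sum (\<lambda>j. sum x (block p j)) J = sum x (?G J)" if "J \<in> F" for J
    proof -
      obtain s t where st: "s \<le> t" "J = {s..t}" using adm_intervals_memD[OF F \<open>J \<in> F\<close>] by blast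
      then have "Min J = s" "Max J = t" by (auto intro!: Min_eqI Max_eqI)
      with st sum_blocks[OF strict_mono_mono[OF p], of s "Suc t" x] show ?thesis
        by (simp add: atLeastLessThanSuc_atLeastAtMost)
    qed
    have disj: "?G J \<inter> ?G J' = {}" if "J \<in> F" "J' \<in> F" "J \<noteq> J'" for J J'
    proof -
      obtain s t where "s \<le> t" "J = {s..t}" using adm_intervals_memD[OF F \<open>J \<in> F\<close>] by blast
      moreover obtain s' t' where "s' \<le> t'" "J' = {s'..t'}" using adm_intervals_memD[OF F \<open>J' \<in> F\<close>] by blast
      ultimately have st: "s \<le> t" "J = {s..t}" "s' \<le> t'" "J' = {s'..t'}" by blast+
      then have "Min J = s" "Max J = t" "Min J' = s'" "Max J' = t'" by (auto intro!: Min_eqI Max_eqI)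
      moreover have "t < s' \<or> t' < s"
      proof (rule ccontr)
        assume "\<not> (t < s' \<or> t' < s)"
        then have "max s s' \<in> J \<inter> J'" using st by auto
        then show False using adm_intervals_disjoint[OF F that] by blast
      qed
      ultimately show ?thesis
        using strict_mono_less_eq[OF p, of "Suc t" s'] strict_mono_less_eq[OF p, of "Suc t'" s] by auto
    qed
    have "quad_var (\<lambda>j. sum x (block p j)) F = (\<Sum>J\<in>F. (sum x (?G J))^2)"
      unfolding quad_var_def using G by simp
    also have "\<dots> \<le> (jnorm x)^2"
    proof (rule quad_var_image_le[OF x F])
      show "\<forall>J\<in>F. finite (?G J) \<and> nat_convex (?G J)" by (simp add: nat_convex_atLeastLessThan)
      show "\<forall>J\<in>F. \<forall>J'\<in>F. J \<noteq> J' \<longrightarrow> ?G J \<inter> ?G J' = {}" using disj by blast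
    qed
    finally show ?thesis .
  qed
  show "(\<lambda>j. sum x (block p j)) \<in> James" using James_if_quad_var_bounded * by blast
  show "jnorm (\<lambda>j. sum x (block p j)) \<le> jnorm x" using jnorm_le_if_quad_var_le[OF *] jnorm_nonneg by blast
qed

lemma card_straddling_blocks_le:
  assumes "strict_mono p"
  shows "card {i. i < N \<and> block p i \<inter> {a..b} \<noteq> {} \<and> \<not> block p i \<subseteq> {a..b}} \<le> 2"
proof -
  have at_most_one: "card {i. i < N \<and> m \<in> block p i} \<le> Suc 0" for m
    using block_disjoint[OF assms] by (subst card_le_Suc0_iff_eq) auto
  have "{i. i < N \<and> block p i \<inter> {a..b} \<noteq> {} \<and> \<not> block p i \<subseteq> {a..b}}
      \<subseteq> {i. i < N \<and> a \<in> block p i} \<union> {i. i < N \<and> b \<in> block p i}"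
  proof
    fix i assume "i \<in> {i. i < N \<and> block p i \<inter> {a..b} \<noteq> {} \<and> \<not> block p i \<subseteq> {a..b}}"
    then have i: "i < N" "block p i \<inter> {a..b} \<noteq> {}" "\<not> block p i \<subseteq> {a..b}" by auto
    obtain k where "k \<in> block p i" "a \<le> k" "k \<le> b" using i(2) by auto
    moreover obtain k' where "k' \<in> block p i" "k' \<notin> {a..b}" using i(3) by blast
    ultimately show "i \<in> {i. i < N \<and> a \<in> block p i} \<union> {i. i < N \<and> b \<in> block p i}"
      using i(1) unfolding block_def by auto
  qed
  then have "card {i. i < N \<and> block p i \<inter> {a..b} \<noteq> {} \<and> \<not> block p i \<subseteq> {a..b}}
      \<le> card ({i. i < N \<and> a \<in> block p i} \<union> {i. i < N \<and> b \<in> block p i})"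
    by (rule card_mono[rotated]) simp
  also have "\<dots> \<le> card {i. i < N \<and> a \<in> block p i} + card {i. i < N \<and> b \<in> block p i}"
    by (rule card_Un_le)
  finally show ?thesis using at_most_one[of a] at_most_one[of b] by linarith
qed

lemma square_add_le: "(x + y)^2 \<le> 2 * x^2 + 2 * (y::real)^2"
  using sum_squares_bound[of x y] by (simp add: power2_sum)

context
  fixes p :: "nat \<Rightarrow> nat" and u :: "nat \<Rightarrow> nat \<Rightarrow> real"
  assumes p: "strict_mono p" and supp: "\<And>i k. k \<notin> block p i \<Longrightarrow> u i k = 0"
begin

lemma nat_convex_full_blocks: "nat_convex {i. i < N \<and> block p i \<subseteq> {a..b}}"
  unfolding nat_convex_def block_subset_atLeastAtMost_iff[OF p]
proof (intro allI impI)
  fix x y z assume xz: "x \<in> {i. i < N \<and> a \<le> p i \<and> p (Suc i) \<le> Suc b}" "z \<in> {i. i < N \<and> a \<le> p i \<and> p (Suc i) \<le> Suc b}"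
    and "x \<le> y" "y \<le> z"
  then have "p x \<le> p y" "p (Suc y) \<le> p (Suc z)" by (simp_all add: strict_mono_less_eq[OF p])
  with xz \<open>y \<le> z\<close> show "y \<in> {i. i < N \<and> a \<le> p i \<and> p (Suc i) \<le> Suc b}" by auto
qed

text \<open>Within one interval \<open>I\<close>, a block lying inside \<open>I\<close> contributes its full block sum,
  a block disjoint from \<open>I\<close> contributes nothing, and at most two blocks straddle an endpoint.\<close>

lemma interval_sum_block_combination_le:
  fixes a :: "nat \<Rightarrow> real" and N a0 b0 :: nat
  defines "Full \<equiv> {i. i < N \<and> block p i \<subseteq> {a0..b0}}"
  shows "(sum (\<lambda>k. \<Sum>i<N. a i * u i k) {a0..b0})^2
    \<le> 2 * (\<Sum>i\<in>Full. a i * sum (u i) (block p i))^2 + 4 * (\<Sum>i<N. (a i)^2 * (sum (u i) {a0..b0})^2)"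
proof -
  let ?I = "{a0..b0}"
  let ?Part = "{i. i < N \<and> block p i \<inter> ?I \<noteq> {} \<and> \<not> block p i \<subseteq> ?I}"
  let ?s = "\<lambda>i. a i * sum (u i) ?I"
  have sum_u: "sum (u i) ?I = sum (u i) (?I \<inter> block p i)" for i
    using supp by (intro sum.mono_neutral_right) auto
  have Full: "Full \<subseteq> {..<N}" and Part: "?Part \<subseteq> {..<N} - Full"
    unfolding Full_def by auto
  have "sum (\<lambda>k. \<Sum>i<N. a i * u i k) ?I = (\<Sum>i<N. ?s i)"
    by (simp add: sum_distrib_left sum.swap[of _ ?I])
  also have "\<dots> = sum ?s Full + sum ?s ({..<N} - Full)"
    using sum.subset_diff[OF Full finite_lessThan, of ?s] by simp
  also have "sum ?s ({..<N} - Full) = sum ?s ?Part"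
  proof (rule sum.mono_neutral_right[OF _ Part])
    show "\<forall>i\<in>{..<N} - Full - ?Part. ?s i = 0"
    proof
      fix i assume "i \<in> {..<N} - Full - ?Part"
      then have "?I \<inter> block p i = {}" by (auto simp: Full_def)
      then show "?s i = 0" using sum_u[of i] by simp
    qed
  qed simp
  also have "sum ?s Full = (\<Sum>i\<in>Full. a i * sum (u i) (block p i))"
  proof (rule sum.cong[OF refl])
    fix i assume "i \<in> Full"
    then have "?I \<inter> block p i = block p i" by (auto simp: Full_def)
    then show "?s i = a i * sum (u i) (block p i)" using sum_u[of i] by simp
  qed
  finally have "(sum (\<lambda>k. \<Sum>i<N. a i * u i k) ?I)^2
      \<le> 2 * (\<Sum>i\<in>Full. a i * sum (u i) (block p i))^2 + 2 * (sum ?s ?Part)^2"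
    by (simp only: square_add_le)
  moreover have "(sum ?s ?Part)^2 \<le> 2 * (\<Sum>i<N. (a i)^2 * (sum (u i) ?I)^2)"
  proof -
    have "(sum ?s ?Part)^2 \<le> real (card ?Part) * (\<Sum>i\<in>?Part. (?s i)^2)"
      using sum_squared_le_sum_of_squares[of ?s ?Part] by (simp add: mult.commute)
    also have "\<dots> \<le> 2 * (\<Sum>i\<in>?Part. (?s i)^2)"
      using card_straddling_blocks_le[OF p, of N a0 b0] by (intro mult_right_mono sum_nonneg) simp_all
    also have "(\<Sum>i\<in>?Part. (?s i)^2) \<le> (\<Sum>i<N. (?s i)^2)"
      using Part by (intro sum_mono2) auto
    finally show ?thesis by (simp add: power_mult_distrib)
  qed
  ultimately show ?thesis by linarith
qed

lemma block_upper_estimate: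
  fixes a :: "nat \<Rightarrow> real"
  assumes uJ: "\<And>i. u i \<in> James"
  shows "(jnorm (\<lambda>k. \<Sum>i<N. a i * u i k))^2
    \<le> 2 * (jnorm (trunc N (\<lambda>i. a i * sum (u i) (block p i))))^2 + 4 * (\<Sum>i<N. (a i)^2 * (jnorm (u i))^2)"
proof (rule jnorm_sq_le_if_quad_var_le)
  let ?c = "trunc N (\<lambda>i. a i * sum (u i) (block p i))"
  let ?Full = "\<lambda>I. {i. i < N \<and> block p i \<subseteq> I}"
  fix F assume F: "adm_intervals F"
  have c: "sum ?c (?Full I) = (\<Sum>i\<in>?Full I. a i * sum (u i) (block p i))" for I
    by (intro sum.cong) (auto simp: trunc_def)
  have "quad_var (\<lambda>k. \<Sum>i<N. a i * u i k) F
      \<le> (\<Sum>I\<in>F. 2 * (sum ?c (?Full I))^2 + 4 * (\<Sum>i<N. (a i)^2 * (sum (u i) I)^2))"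
    unfolding quad_var_def c
  proof (rule sum_mono)
    fix I assume "I \<in> F"
    then obtain a0 b0 where "I = {a0..b0}" using adm_intervals_memD[OF F] by blast
    then show "(sum (\<lambda>k. \<Sum>i<N. a i * u i k) I)^2
      \<le> 2 * (\<Sum>i\<in>?Full I. a i * sum (u i) (block p i))^2 + 4 * (\<Sum>i<N. (a i)^2 * (sum (u i) I)^2)"
      using interval_sum_block_combination_le[of a N a0 b0] by simp
  qed
  also have "\<dots> = 2 * (\<Sum>I\<in>F. (sum ?c (?Full I))^2) + 4 * (\<Sum>i<N. (a i)^2 * quad_var (u i) F)"
    by (simp add: sum.distrib sum_distrib_left quad_var_def sum.swap[of _ F])
  also have "\<dots> \<le> 2 * (jnorm ?c)^2 + 4 * (\<Sum>i<N. (a i)^2 * (jnorm (u i))^2)"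
  proof -
    have "(\<Sum>I\<in>F. (sum ?c (?Full I))^2) \<le> (jnorm ?c)^2"
    proof (rule quad_var_image_le[OF trunc_James F])
      show "\<forall>I\<in>F. finite (?Full I) \<and> nat_convex (?Full I)"
        using adm_intervals_memD[OF F] nat_convex_full_blocks by auto
      show "\<forall>I\<in>F. \<forall>I'\<in>F. I \<noteq> I' \<longrightarrow> ?Full I \<inter> ?Full I' = {}"
        using adm_intervals_disjoint[OF F] start_in_block[OF p] by blast
    qed
    moreover have "(\<Sum>i<N. (a i)^2 * quad_var (u i) F) \<le> (\<Sum>i<N. (a i)^2 * (jnorm (u i))^2)"
      by (intro sum_mono mult_left_mono quad_var_le_jnorm_sq[OF uJ F]) simp
    ultimately show ?thesis by linarith
  qed
  finally show "quad_var (\<lambda>k. \<Sum>i<N. a i * u i k) F \<le> 2 * (jnorm ?c)^2 + 4 * (\<Sum>i<N. (a i)^2 * (jnorm (u i))^2)" .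
qed

end

section \<open>Coordinate projections and functionals\<close>

definition proj_on :: "nat set \<Rightarrow> james \<Rightarrow> james" where
  "proj_on A x = Abs_james (zero_outside A (Rep_james x))"

lemma Rep_proj_on: "nat_convex A \<Longrightarrow> Rep_james (proj_on A x) = zero_outside A (Rep_james x)"
  unfolding proj_on_def by (simp add: Abs_james_inverse zero_outside_James(1)[OF Rep_james_in_James])

lemma Rep_proj_on_apply:
  "nat_convex A \<Longrightarrow> Rep_james (proj_on A x) k = (if k \<in> A then Rep_james x k else 0)"
  by (simp add: Rep_proj_on zero_outside_def)

lemma norm_proj_on_le: "nat_convex A \<Longrightarrow> norm (proj_on A x) \<le> norm x"
  using zero_outside_James(2)[OF Rep_james_in_James] by (simp add: norm_james_eq Rep_proj_on)

lemma tail_norm_small: "0 < e \<Longrightarrow> \<exists>p. \<forall>q\<ge>p. norm (proj_on {q..} x) \<le> e"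
  using tail_jnorm_small[OF Rep_james_in_James, of e x]
  by (simp add: norm_james_eq Rep_proj_on nat_convex_atLeast)

lemma norm_proj_on_lessThan_le: "norm (proj_on {..<m} x) \<le> (\<Sum>k<m. \<bar>Rep_james x k\<bar>)"
  using norm_le_sum_abs_finite_support[of "{..<m}" "proj_on {..<m} x"]
  by (simp add: Rep_proj_on_apply nat_convex_lessThan)

lemma abs_segment_sum_le_norm_tail:
  "\<bar>\<Sum>k\<in>{m..<n}. Rep_james x k\<bar> \<le> norm (proj_on {m..} x)"
proof (cases "m < n")
  case True
  have "(\<Sum>k\<in>{m..<n}. Rep_james x k) = sum (Rep_james (proj_on {m..} x)) {m..n - 1}"
    using True by (intro sum.cong) (auto simp: Rep_proj_on_apply nat_convex_atLeast)
  thus ?thesis using abs_interval_sum_le_norm[of m "n - 1" "proj_on {m..} x"] True by simp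
qed simp

lemma summable_Rep_james: "summable (Rep_james x)"
  unfolding summable_Cauchy
proof (intro allI impI)
  fix e :: real assume "0 < e"
  then obtain p where "\<forall>q\<ge>p. norm (proj_on {q..} x) \<le> e/2"
    using tail_norm_small[of "e/2" x] by auto
  then have "\<bar>sum (Rep_james x) {m..<n}\<bar> < e" if "p \<le> m" for m n
    using abs_segment_sum_le_norm_tail[of x m n] that \<open>0 < e\<close> by fastforce
  then show "\<exists>N. \<forall>m\<ge>N. \<forall>n. norm (sum (Rep_james x) {m..<n}) < e" by auto
qed

text \<open>The functional \<open>x \<mapsto> \<Sum>\<^sub>k x\<^sub>k\<close> is bounded on \<open>J\<close>; it detects the non-trivial part of
  a weakly Cauchy sequence, since it vanishes on the coordinatewise null, weakly null part.\<close>

definition total_sum :: "james \<Rightarrow> real" where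
  "total_sum x = (\<Sum>k. Rep_james x k)"

lemma abs_total_sum_le_norm: "\<bar>total_sum x\<bar> \<le> norm x"
proof (rule tendsto_upperbound)
  show "(\<lambda>N. \<bar>\<Sum>k<N. Rep_james x k\<bar>) \<longlonglongrightarrow> \<bar>total_sum x\<bar>"
    unfolding total_sum_def by (intro tendsto_rabs summable_LIMSEQ summable_Rep_james)
  show "\<forall>\<^sub>F N in sequentially. \<bar>\<Sum>k<N. Rep_james x k\<bar> \<le> norm x"
    using abs_segment_sum_le_norm_tail[of x 0] norm_proj_on_le[OF nat_convex_atLeast, of 0 x]
    by (simp add: atLeast0LessThan) (meson always_eventually order_trans)
qed simp

lemma bounded_linear_total_sum: "bounded_linear total_sum"
  by (rule bounded_linear_intro[where K=1])
    (auto simp: total_sum_def suminf_add[OF summable_Rep_james summable_Rep_james] suminf_mult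
        summable_Rep_james abs_total_sum_le_norm[unfolded total_sum_def])

lemma total_sum_proj_on_block:
  assumes "strict_mono p"
  shows "total_sum (proj_on (block p j) x) = sum (Rep_james x) (block p j)"
proof -
  have "total_sum (proj_on (block p j) x) = (\<Sum>k<p (Suc j). Rep_james (proj_on (block p j) x) k)"
    unfolding total_sum_def
    by (rule suminf_finite) (auto simp: Rep_proj_on_apply nat_convex_atLeastLessThan block_def)
  also have "\<dots> = sum (Rep_james x) (block p j)"
    by (rule sum.mono_neutral_cong_right) (auto simp: Rep_proj_on_apply nat_convex_atLeastLessThan block_def)
  finally show ?thesis .
qed

lemma norming_functional:
  fixes x :: james
  shows "\<exists>g. bounded_linear g \<and> (\<forall>y. \<bar>g y\<bar> \<le> norm y) \<and> norm x \<le> 2 * g x"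
proof (cases "x = 0")
  case True
  show ?thesis by (rule exI[of _ "\<lambda>y. 0"]) (simp add: True)
next
  case False
  hence nx: "0 < norm x" by simp
  obtain F where F: "adm_intervals F" "(jnorm (Rep_james x))^2 - 3/4 * (norm x)^2 < quad_var (Rep_james x) F"
    using quad_var_near_jnorm_sq[OF Rep_james_in_James, of "3/4 * (norm x)^2" x] nx by auto
  define v where "v = quad_var (Rep_james x) F"
  have v: "(norm x)^2 / 4 < v" using F(2) unfolding v_def norm_james_eq by simp
  hence vpos: "0 < v" using nx by (smt (verit) zero_less_power divide_pos_pos)
  define t where "t I = sum (Rep_james x) I / sqrt v" for I
  define g where "g y = (\<Sum>I\<in>F. t I * sum (Rep_james y) I)" for y
  have gy: "\<bar>g y\<bar> \<le> norm y" for y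
  proof -
    have "(g y)^2 \<le> (\<Sum>I\<in>F. (t I)^2) * (\<Sum>I\<in>F. (sum (Rep_james y) I)^2)"
      unfolding g_def by (rule Cauchy_Schwarz_ineq_sum)
    also have "(\<Sum>I\<in>F. (t I)^2) = 1"
      unfolding t_def using vpos by (simp add: power_divide sum_divide_distrib[symmetric] v_def quad_var_def)
    finally have "(g y)^2 \<le> quad_var (Rep_james y) F" by (simp add: quad_var_def)
    hence "sqrt ((g y)^2) \<le> sqrt (quad_var (Rep_james y) F)" by (rule real_sqrt_le_mono)
    hence "\<bar>g y\<bar> \<le> sqrt (quad_var (Rep_james y) F)" by simp
    also have "\<dots> \<le> norm y" by (rule sqrt_quad_var_le_norm[OF F(1)])
    finally show ?thesis .
  qed
  have lin: "bounded_linear g"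
  proof (rule bounded_linear_intro[where K=1])
    fix y z :: james and r :: real
    show "g (y + z) = g y + g z"
      unfolding g_def by (simp add: Rep_james_add sum.distrib distrib_left sum.distrib)
    show "g (r *\<^sub>R y) = r *\<^sub>R g y"
      unfolding g_def by (simp add: Rep_james_scaleR sum_distrib_left sum_distrib_left mult.left_commute)
    show "norm (g y) \<le> norm y * 1" using gy by simp
  qed
  have "g x = v / sqrt v"
    unfolding g_def t_def v_def quad_var_def by (simp add: sum_divide_distrib[symmetric] power2_eq_square)
  also have "\<dots> = sqrt v" using vpos by (simp add: real_div_sqrt)
  finally have gx: "g x = sqrt v" .
  have "norm x / 2 \<le> sqrt v"
  proof (rule real_le_rsqrt)
    show "(norm x / 2)^2 \<le> v" using v by (simp add: power_divide)
  qed
  hence "norm x \<le> 2 * g x" using gx by simp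
  thus ?thesis using lin gy by blast
qed

lemma bounded_linear_in_jdual: assumes "bounded_linear g" shows "(\<lambda>z. g (Abs_james z)) \<in> jdual"
proof -
  obtain K where K: "\<And>x. norm (g x) \<le> norm x * K" using bounded_linear.bounded[OF assms] by blast
  have add: "Abs_james (\<lambda>i. x i + y i) = Abs_james x + Abs_james y" if "x \<in> James" "y \<in> James" for x y
    by (rule james_eqI) (simp add: Abs_james_inverse that James_add(1))
  have sc: "Abs_james (\<lambda>i. c * x i) = c *\<^sub>R Abs_james x" if "x \<in> James" for c x
    by (rule james_eqI) (simp add: Abs_james_inverse that James_scale_le(1))
  show ?thesis unfolding jdual_def
  proof (intro CollectI conjI ballI allI exI)
    fix x y assume "x \<in> James" "y \<in> James"
    thus "g (Abs_james (\<lambda>i. x i + y i)) = g (Abs_james x) + g (Abs_james y)"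
      using add linear_add[OF bounded_linear.linear[OF assms]] by simp
  next
    fix c x assume "x \<in> James"
    thus "g (Abs_james (\<lambda>i. c * x i)) = c * g (Abs_james x)"
      using sc linear_scale[OF bounded_linear.linear[OF assms]] by simp
  next
    fix x assume "x \<in> James"
    thus "\<bar>g (Abs_james x)\<bar> \<le> K * jnorm x"
      using K[of "Abs_james x"] by (simp add: norm_james_eq Abs_james_inverse mult.commute)
  qed
qed

lemma jdual_bounded_linear: assumes "f \<in> jdual" shows "bounded_linear (\<lambda>x. f (Rep_james x))"
proof -
  from assms obtain C where C: "\<forall>x\<in>James. \<bar>f x\<bar> \<le> C * jnorm x" unfolding jdual_def by blast
  show ?thesis
  proof (rule bounded_linear_intro[where K=C])
    fix x y :: james and r :: real
    show "f (Rep_james (x + y)) = f (Rep_james x) + f (Rep_james y)"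
      using assms Rep_james_in_James unfolding jdual_def Rep_james_add by blast
    show "f (Rep_james (r *\<^sub>R x)) = r *\<^sub>R f (Rep_james x)"
      using assms Rep_james_in_James unfolding jdual_def Rep_james_scaleR by simp
    show "norm (f (Rep_james x)) \<le> norm x * C"
      using C Rep_james_in_James[of x] by (simp add: norm_james_eq mult.commute)
  qed
qed


section \<open>Weakly convergent sequences are bounded\<close>

lemma quarter_weighted_tail_bound:
  fixes G :: "nat \<Rightarrow> 'a::real_normed_vector \<Rightarrow> real"
  assumes G: "\<And>i y. \<bar>G i y\<bar> \<le> norm y"
  shows "summable (\<lambda>i. (1/4)^(i + k) * G (i + k) y)"
    "\<bar>\<Sum>i. (1/4)^(i + k) * G (i + k) y\<bar> \<le> (1/4)^k * (4/3) * norm y"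
proof -
  have "(\<lambda>i. (1/4::real)^i) sums (4/3)"
    using geometric_sums[of "1/4::real"] by simp
  from sums_mult[OF this, of "(1/4)^k * norm y"]
  have s: "(\<lambda>i. (1/4::real)^(i + k) * norm y) sums ((1/4)^k * (4/3) * norm y)"
    by (simp add: power_add algebra_simps)
  have b: "norm ((1/4)^(i + k) * G (i + k) y) \<le> (1/4)^(i + k) * norm y" for i
    using G[of "i + k" y] by (simp add: abs_mult)
  show "summable (\<lambda>i. (1/4)^(i + k) * G (i + k) y)"
    by (rule summable_comparison_test'[OF sums_summable[OF s] b])
  show "\<bar>\<Sum>i. (1/4)^(i + k) * G (i + k) y\<bar> \<le> (1/4)^k * (4/3) * norm y"
    using norm_suminf_le[OF b sums_summable[OF s]] sums_unique[OF s] by simp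
qed

lemma bounded_linear_quarter_weighted_sum:
  fixes G :: "nat \<Rightarrow> 'a::real_normed_vector \<Rightarrow> real"
  assumes "\<And>i. bounded_linear (G i)" "\<And>i y. \<bar>G i y\<bar> \<le> norm y"
  shows "bounded_linear (\<lambda>y. \<Sum>i. (1/4)^i * G i y)"
proof (rule bounded_linear_intro[where K="4/3"])
  have sm: "summable (\<lambda>i. (1/4)^i * G i y)" for y
    using quarter_weighted_tail_bound(1)[OF assms(2), where k=0] by simp
  fix x y :: 'a and r :: real
  show "(\<Sum>i. (1/4)^i * G i (x + y)) = (\<Sum>i. (1/4)^i * G i x) + (\<Sum>i. (1/4)^i * G i y)"
    by (simp add: linear_add[OF bounded_linear.linear[OF assms(1)]] distrib_left suminf_add[OF sm sm])
  show "(\<Sum>i. (1/4)^i * G i (r *\<^sub>R x)) = r *\<^sub>R (\<Sum>i. (1/4)^i * G i x)"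
    by (simp add: linear_scale[OF bounded_linear.linear[OF assms(1)]] mult.left_commute suminf_mult[OF sm])
  show "norm (\<Sum>i. (1/4)^i * G i x) \<le> norm x * (4/3)"
    using quarter_weighted_tail_bound(2)[OF assms(2), where k=0] by (simp add: mult.commute)
qed

text \<open>The gliding hump: the \<open>j\<close>-th term of \<open>\<Sum>\<^sub>i 4\<^sup>-\<^sup>i G\<^sub>i\<close> dominates the tail after it.\<close>

lemma quarter_weighted_sum_ge:
  fixes G :: "nat \<Rightarrow> 'a::real_normed_vector \<Rightarrow> real"
  assumes G: "\<And>i y. \<bar>G i y\<bar> \<le> norm y" and norm_x: "norm x \<le> 2 * G j x"
  shows "(\<Sum>i<j. (1/4)^i * G i x) + (1/4)^j * norm x / 6 \<le> (\<Sum>i. (1/4)^i * G i x)"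
proof -
  have sm: "summable (\<lambda>i. (1/4)^i * G i x)"
    using quarter_weighted_tail_bound(1)[OF G, where k=0] by simp
  have "(\<Sum>i. (1/4)^i * G i x) = (\<Sum>i. (1/4)^(i + Suc j) * G (i + Suc j) x) + (\<Sum>i<Suc j. (1/4)^i * G i x)"
    by (rule suminf_split_initial_segment[OF sm])
  moreover have "\<bar>\<Sum>i. (1/4)^(i + Suc j) * G (i + Suc j) x\<bar> \<le> (1/4)^j * norm x / 3"
    using quarter_weighted_tail_bound(2)[OF G, where k = "Suc j" and y = x] by simp
  moreover have "(1/4)^j * norm x / 2 \<le> (1/4)^j * G j x"
    using norm_x by (simp add: mult_left_mono)
  ultimately show ?thesis by (simp only: sum.lessThan_Suc abs_le_iff) linarith
qed

lemma weakly_convergent_imp_bounded: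
  fixes X :: "nat \<Rightarrow> 'a::real_normed_vector"
  assumes norming: "\<And>x::'a. \<exists>g. bounded_linear g \<and> (\<forall>y. \<bar>g y\<bar> \<le> norm y) \<and> norm x \<le> 2 * g x"
    and conv: "\<And>g::'a \<Rightarrow> real. bounded_linear g \<Longrightarrow> convergent (\<lambda>n. g (X n))"
  shows "\<exists>M. \<forall>n. norm (X n) \<le> M"
proof (rule ccontr)
  assume "\<not> ?thesis"
  hence unb: "\<exists>n. M < norm (X n)" for M by (meson not_le)
  define gsel where "gsel x = (SOME g. bounded_linear g \<and> (\<forall>y. \<bar>g y\<bar> \<le> norm y) \<and> norm x \<le> 2 * g x)" for x :: 'a
  have gsel: "bounded_linear (gsel x)" "\<And>y. \<bar>gsel x y\<bar> \<le> norm y" "norm x \<le> 2 * gsel x x" for x :: 'a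
    using someI_ex[OF norming[of x]] unfolding gsel_def by blast+
  have bounded_on_X: "\<exists>B. \<forall>n. \<bar>h (X n)\<bar> \<le> B" if "bounded_linear h" for h :: "'a \<Rightarrow> real"
    using convergent_imp_Bseq[OF conv[OF that]] unfolding Bseq_def real_norm_def by (blast intro: less_imp_le)
  define bnd where "bnd h = (SOME B. \<forall>n. \<bar>h (X n)\<bar> \<le> B)" for h :: "'a \<Rightarrow> real"
  define nsel where "nsel j h = (SOME n. 6 * 4^j * (bnd h + real j) < norm (X n))" for j and h :: "'a \<Rightarrow> real"
  have nsel: "6 * 4^j * (bnd h + real j) < norm (X (nsel j h))" for j h
    using someI_ex[OF unb] unfolding nsel_def by blast
  (* hd j is the partial sum of the first j weighted functionals; the next hump is placed where hd j is negligible. *)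
  define hd where "hd = rec_nat (\<lambda>y. 0) (\<lambda>j h. (\<lambda>y. h y + (1/4)^j * gsel (X (nsel j h)) y))"
  define G where "G j = gsel (X (nsel j (hd j)))" for j
  define n where "n j = nsel j (hd j)" for j
  have hd_eq: "hd j = (\<lambda>y. \<Sum>i<j. (1/4)^i * G i y)" for j
    by (induction j) (simp_all add: hd_def G_def)
  have Gb: "bounded_linear (G i)" "\<And>y. \<bar>G i y\<bar> \<le> norm y" for i
    unfolding G_def using gsel by auto
  have bnd: "\<bar>hd j (X m)\<bar> \<le> bnd (hd j)" for j m
  proof -
    have "bounded_linear (hd j)"
      unfolding hd_eq by (intro bounded_linear_sum bounded_linear_const_mult Gb)
    from someI_ex[OF bounded_on_X[OF this]] show ?thesis unfolding bnd_def by blast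
  qed
  define f where "f y = (\<Sum>i. (1/4)^i * G i y)" for y
  have big: "real j < f (X (n j))" for j
  proof -
    have "hd j (X (n j)) + (1/4)^j * norm (X (n j)) / 6 \<le> f (X (n j))"
      unfolding f_def hd_eq by (rule quarter_weighted_sum_ge[OF Gb(2)]) (simp add: G_def n_def gsel)
    moreover have "bnd (hd j) + real j < (1/4)^j * norm (X (n j)) / 6"
      using nsel[of j "hd j"] unfolding n_def by (simp add: field_simps power_divide)
    ultimately show ?thesis using bnd[of j "n j"] by linarith
  qed
  obtain K where K: "\<forall>m. \<bar>f (X m)\<bar> \<le> K"
    using bounded_on_X[OF bounded_linear_quarter_weighted_sum[of G, OF Gb]] unfolding f_def by blast
  obtain j :: nat where "K < real j" using reals_Archimedean2 by blast
  then show False using big[of j] K[rule_format, of "n j"] by simp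
qed

section \<open>Extraction of almost block-supported subsequences\<close>

lemma diff_proj_on_interval:
  assumes "a \<le> b"
  shows "x - proj_on {a..<b} x = proj_on {..<a} x + proj_on {b..} x"
  using assms
  by (intro james_eqI) (simp add: Rep_proj_on_apply nat_convex_lessThan nat_convex_atLeast nat_convex_atLeastLessThan)

text \<open>A coordinatewise null sequence has, far out, terms concentrated on a prescribed tail,
  and each such term is concentrated on a finite interval.\<close>

lemma almost_block_term_exists:
  fixes Y :: "nat \<Rightarrow> james"
  assumes coord: "\<And>k. (\<lambda>n. Rep_james (Y n) k) \<longlonglongrightarrow> 0"
    and \<eta>: "0 < \<eta>" and Q: "eventually Q sequentially"
  shows "\<exists>n\<ge>l. \<exists>q>m. Q n \<and> norm (Y n - proj_on {m..<q} (Y n)) \<le> \<eta>"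
proof -
  have "(\<lambda>n. \<Sum>k<m. \<bar>Rep_james (Y n) k\<bar>) \<longlonglongrightarrow> (\<Sum>k<m. \<bar>0::real\<bar>)"
    by (intro tendsto_sum tendsto_rabs coord)
  then have "\<forall>\<^sub>F n in sequentially. (\<Sum>k<m. \<bar>Rep_james (Y n) k\<bar>) < \<eta> / 2"
    using \<eta> by (intro order_tendstoD) auto
  then have "\<forall>\<^sub>F n in sequentially. l \<le> n \<and> Q n \<and> (\<Sum>k<m. \<bar>Rep_james (Y n) k\<bar>) < \<eta> / 2"
    using Q eventually_ge_at_top[of l] by eventually_elim auto
  then obtain n where n: "l \<le> n" "Q n" "(\<Sum>k<m. \<bar>Rep_james (Y n) k\<bar>) < \<eta> / 2"
    using eventually_happens'[OF sequentially_bot] by blast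
  have head: "norm (proj_on {..<m} (Y n)) \<le> \<eta> / 2"
    using norm_proj_on_lessThan_le[of m "Y n"] n(3) by linarith
  obtain q0 where "\<forall>q\<ge>q0. norm (proj_on {q..} (Y n)) \<le> \<eta> / 2"
    using tail_norm_small[of "\<eta> / 2" "Y n"] \<eta> by auto
  then have q: "norm (proj_on {max q0 (Suc m)..} (Y n)) \<le> \<eta> / 2" by simp
  have "norm (Y n - proj_on {m..<max q0 (Suc m)} (Y n))
      \<le> norm (proj_on {..<m} (Y n)) + norm (proj_on {max q0 (Suc m)..} (Y n))"
    unfolding diff_proj_on_interval[OF max.coboundedI2[OF le_SucI[OF order_refl]]] by (rule norm_triangle_ineq)
  with n head q show ?thesis by (intro exI[of _ n] conjI exI[of _ "max q0 (Suc m)"]) auto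
qed

lemma extract_block_subsequence:
  fixes Y :: "nat \<Rightarrow> james" and \<eta> :: "nat \<Rightarrow> real" and Q :: "nat \<Rightarrow> nat \<Rightarrow> bool"
  assumes coord: "\<And>k. (\<lambda>n. Rep_james (Y n) k) \<longlonglongrightarrow> 0"
    and \<eta>: "\<And>j. 0 < \<eta> j"
    and Q: "\<And>j. eventually (Q j) sequentially"
  obtains n p where "strict_mono n" "strict_mono p" "p 0 = start"
    "\<And>j. Q j (n j)" "\<And>j. norm (Y (n j) - proj_on (block p j) (Y (n j))) \<le> \<eta> j"
proof -
  define P where "P j s nq \<longleftrightarrow> fst s \<le> fst nq \<and> snd s < snd nq \<and> Q j (fst nq)
      \<and> norm (Y (fst nq) - proj_on {snd s..<snd nq} (Y (fst nq))) \<le> \<eta> j"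
    for j and s nq :: "nat \<times> nat"
  define step where "step j s = (SOME nq. P j s nq)" for j s
  have "\<exists>nq. P j s nq" for j s
  proof -
    obtain n q where "fst s \<le> n" "snd s < q" "Q j n" "norm (Y n - proj_on {snd s..<q} (Y n)) \<le> \<eta> j"
      using almost_block_term_exists[OF coord \<eta> Q, of "fst s" "snd s" j] by blast
    then show ?thesis unfolding P_def by (intro exI[of _ "(n, q)"]) simp
  qed
  then have "P j s (step j s)" for j s unfolding step_def by (rule someI_ex)
  then have step: "fst s \<le> fst (step j s)" "snd s < snd (step j s)" "Q j (fst (step j s))"
    "norm (Y (fst (step j s)) - proj_on {snd s..<snd (step j s)} (Y (fst (step j s)))) \<le> \<eta> j" for j s
    unfolding P_def by simp_all
  (* the state after j steps: a lower bound for the next index, and the end of the last block *)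
  define st where "st = rec_nat (0, start) (\<lambda>j s. (Suc (fst (step j s)), snd (step j s)))"
  define n where "n j = fst (step j (st j))" for j
  define p where "p j = snd (st j)" for j
  have st_Suc: "st (Suc j) = (Suc (n j), p (Suc j))" for j
    by (simp add: st_def n_def p_def)
  show ?thesis
  proof
    have "fst (st (Suc j)) \<le> n (Suc j)" for j unfolding n_def by (rule step(1))
    then show "strict_mono n" unfolding strict_mono_Suc_iff by (simp add: st_Suc Suc_le_eq)
    show "strict_mono p"
      unfolding strict_mono_Suc_iff using step(2)[where s = "st j" for j] by (simp add: p_def st_def)
    show "p 0 = start" by (simp add: p_def st_def)
    show "Q j (n j)" for j using step(3) by (simp add: n_def)
    show "norm (Y (n j) - proj_on (block p j) (Y (n j))) \<le> \<eta> j" for j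
      using step(4)[where j = j and s = "st j"] by (simp add: block_def n_def p_def st_def)
  qed
qed

definition basis_comb :: "nat \<Rightarrow> (nat \<Rightarrow> real) \<Rightarrow> james" where
  "basis_comb N a = (\<Sum>j<N. a j *\<^sub>R basis_vec j)"

lemma Rep_basis_comb: "Rep_james (basis_comb N a) = trunc N a"
  by (rule ext) (simp add: basis_comb_def Rep_basis_vec trunc_def unitvec_def if_distrib cong: if_cong)

lemma norm_basis_comb: "norm (basis_comb N a) = jnorm (trunc N a)"
  by (simp add: norm_james_eq Rep_basis_comb)

lemma abs_coeff_le_norm_basis_comb: "j < N \<Longrightarrow> \<bar>a j\<bar> \<le> norm (basis_comb N a)"
  using abs_coord_le_norm[of "basis_comb N a" j] by (simp add: Rep_basis_comb trunc_def)

lemma abs_sum_coeffs_le_norm_basis_comb: "\<bar>\<Sum>j<N. a j\<bar> \<le> norm (basis_comb N a)"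
proof (cases N)
  case (Suc M)
  have "(\<Sum>j<N. a j) = sum (Rep_james (basis_comb N a)) {0..M}"
    unfolding Rep_basis_comb trunc_def Suc by (simp add: lessThan_Suc_atMost atLeast0AtMost)
  then show ?thesis using abs_interval_sum_le_norm[of 0 M "basis_comb N a"] by simp
qed simp

lemma sum_squares_coeffs_le_norm_basis_comb: "(\<Sum>j<N. (a j)^2) \<le> (norm (basis_comb N a))^2"
proof -
  let ?F = "(\<lambda>j. {j..j}) ` {..<N}"
  have adm: "adm_intervals ?F"
    unfolding adm_intervals_def
  proof (intro conjI)
    show "\<forall>I\<in>?F. \<exists>a b. a \<le> b \<and> I = {a..b}" by blast
    show "pairwise disjnt ?F" unfolding pairwise_def disjnt_def by auto
  qed simp
  have "quad_var (trunc N a) ?F = (\<Sum>j<N. (sum (trunc N a) {j..j})^2)"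
    unfolding quad_var_def by (rule sum.reindex[unfolded comp_def]) (auto simp: inj_on_def)
  also have "\<dots> = (\<Sum>j<N. (a j)^2)" by (simp add: trunc_def)
  finally show ?thesis
    using quad_var_le_jnorm_sq[OF trunc_James[of N a] adm] by (simp add: norm_basis_comb)
qed

lemma norm_lincomb_le:
  fixes V :: "nat \<Rightarrow> james"
  shows "norm (\<Sum>j<N. a j *\<^sub>R V j) \<le> norm (basis_comb N a) * (\<Sum>j<N. norm (V j))"
proof -
  have "norm (\<Sum>j<N. a j *\<^sub>R V j) \<le> (\<Sum>j<N. \<bar>a j\<bar> * norm (V j))"
    by (rule order_trans[OF norm_sum]) simp
  also have "\<dots> \<le> (\<Sum>j<N. norm (basis_comb N a) * norm (V j))"
    by (intro sum_mono mult_right_mono abs_coeff_le_norm_basis_comb) auto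
  finally show ?thesis by (simp add: sum_distrib_left)
qed

lemma norm_basis_comb_le_l1: "norm (basis_comb N a) \<le> (\<Sum>j<N. \<bar>a j\<bar>)"
proof -
  have "norm (basis_comb N a) \<le> (\<Sum>j<N. norm (a j *\<^sub>R basis_vec j))"
    unfolding basis_comb_def by (rule norm_sum)
  also have "\<dots> \<le> (\<Sum>j<N. \<bar>a j\<bar>)"
    using norm_basis_vec_le by (intro sum_mono) (simp add: mult_left_le)
  finally show ?thesis .
qed

lemma norm_basis_comb_mult_le: "norm (basis_comb N (\<lambda>j. b j * a j)) \<le> norm (basis_comb N a) * (\<Sum>j<N. \<bar>b j\<bar>)"
proof -
  have "norm (basis_comb N (\<lambda>j. b j * a j)) \<le> (\<Sum>j<N. \<bar>b j\<bar> * \<bar>a j\<bar>)"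
    using norm_basis_comb_le_l1[of N "\<lambda>j. b j * a j"] by (simp add: abs_mult)
  also have "\<dots> \<le> (\<Sum>j<N. norm (basis_comb N a) * \<bar>b j\<bar>)"
  proof (rule sum_mono)
    fix j assume "j \<in> {..<N}"
    then have "\<bar>a j\<bar> \<le> norm (basis_comb N a)" by (simp add: abs_coeff_le_norm_basis_comb)
    then show "\<bar>b j\<bar> * \<bar>a j\<bar> \<le> norm (basis_comb N a) * \<bar>b j\<bar>"
      by (metis abs_ge_zero mult.commute mult_right_mono)
  qed
  finally show ?thesis by (simp add: sum_distrib_left)
qed

lemma norm_basis_comb_weighted:
  "\<bar>norm (basis_comb N (\<lambda>j. a j * w j)) - \<bar>c\<bar> * norm (basis_comb N a)\<bar>
    \<le> norm (basis_comb N a) * (\<Sum>j<N. \<bar>w j - c\<bar>)"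
proof -
  have "basis_comb N (\<lambda>j. a j * w j) - c *\<^sub>R basis_comb N a = basis_comb N (\<lambda>j. (w j - c) * a j)"
    by (simp add: basis_comb_def scaleR_sum_right sum_subtractf[symmetric] algebra_simps)
  then show ?thesis
    using norm_triangle_ineq3[of "basis_comb N (\<lambda>j. a j * w j)" "c *\<^sub>R basis_comb N a"]
      norm_basis_comb_mult_le[of N "\<lambda>j. w j - c" a] by simp
qed

lemma sum_half_powers_le_1: "(\<Sum>j<N. (1/2::real)^(Suc j)) \<le> 1"
proof -
  have "(\<Sum>j<N. (1/2::real)^(Suc j)) = 1 - (1/2)^N"
    by (induction N) (simp_all add: field_simps)
  then show ?thesis by simp
qed

definition block_sums :: "(nat \<Rightarrow> nat) \<Rightarrow> james \<Rightarrow> james" where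
  "block_sums p x = Abs_james (\<lambda>j. sum (Rep_james x) (block p j))"

context
  fixes p :: "nat \<Rightarrow> nat"
  assumes p: "strict_mono p"
begin

lemma Rep_block_sums: "Rep_james (block_sums p x) = (\<lambda>j. sum (Rep_james x) (block p j))"
  unfolding block_sums_def using block_sums_James(1)[OF p Rep_james_in_James] by (simp add: Abs_james_inverse)

lemma norm_block_sums_le: "norm (block_sums p x) \<le> norm x"
  using block_sums_James(2)[OF p Rep_james_in_James] by (simp add: norm_james_eq Rep_block_sums)

lemma bounded_linear_block_sums: "bounded_linear (block_sums p)"
proof (rule bounded_linear_intro[where K=1])
  show "block_sums p (x + y) = block_sums p x + block_sums p y" for x y
    by (rule james_eqI) (simp add: Rep_block_sums sum.distrib)
  show "block_sums p (r *\<^sub>R x) = r *\<^sub>R block_sums p x" for r x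
    by (rule james_eqI) (simp add: Rep_block_sums sum_distrib_left)
qed (simp add: norm_block_sums_le)

lemma total_sum_block_supported:
  assumes "\<And>k. k \<notin> block p i \<Longrightarrow> Rep_james u k = 0"
  shows "total_sum u = sum (Rep_james u) (block p i)"
  unfolding total_sum_def
proof (rule suminf_finite)
  show "Rep_james u k = 0" if "k \<notin> block p i" for k using assms that .
qed (simp add: block_def)

lemma block_sums_block_supported:
  assumes "\<And>k. k \<notin> block p i \<Longrightarrow> Rep_james u k = 0"
  shows "block_sums p u = total_sum u *\<^sub>R basis_vec i"
proof (rule james_eqI)
  fix j
  have "sum (Rep_james u) (block p j) = 0" if "j \<noteq> i"
    using assms block_disjoint[OF p, of _ j i] that by (intro sum.neutral) blast
  then show "Rep_james (block_sums p u) j = Rep_james (total_sum u *\<^sub>R basis_vec i) j"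
    by (cases "j = i") (simp_all add: Rep_block_sums Rep_basis_vec unitvec_def total_sum_block_supported[OF assms])
qed

lemma block_sums_proj_on_tail: "block_sums p x = block_sums p (proj_on {p 0..} x)"
proof (rule james_eqI)
  fix j
  have "block p j \<subseteq> {p 0..}" using strict_mono_less_eq[OF p, of 0 j] by (auto simp: block_def)
  then show "Rep_james (block_sums p x) j = Rep_james (block_sums p (proj_on {p 0..} x)) j"
    unfolding Rep_block_sums by (intro sum.cong) (auto simp: Rep_proj_on_apply nat_convex_atLeast)
qed

text \<open>An \<open>\<ell>\<^sub>2\<close>-type upper estimate for sums of blocks: only the block sums see the
  \<open>\<ell>\<^sub>1\<close>-like behaviour of the James norm.\<close>

lemma norm_sum_blocks_sq_le:
  fixes U :: "nat \<Rightarrow> james"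
  assumes supp: "\<And>j k. k \<notin> block p j \<Longrightarrow> Rep_james (U j) k = 0"
  shows "(norm (\<Sum>j<N. a j *\<^sub>R U j))^2
    \<le> 2 * (norm (basis_comb N (\<lambda>j. a j * total_sum (U j))))^2 + 4 * (\<Sum>j<N. (a j)^2 * (norm (U j))^2)"
  using block_upper_estimate[where p = p and u = "\<lambda>j. Rep_james (U j)" and N = N and a = a, OF p supp Rep_james_in_James]
  by (simp add: norm_james_eq Rep_james_sum Rep_basis_comb total_sum_block_supported[OF supp])

end

lemma almost_block_subsequence:
  fixes Y :: "nat \<Rightarrow> james"
  assumes coord: "\<And>k. (\<lambda>n. Rep_james (Y n) k) \<longlonglongrightarrow> 0"
    and total: "(\<lambda>n. total_sum (Y n)) \<longlonglongrightarrow> \<delta>"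
    and \<epsilon>: "0 < \<epsilon>" and Q: "eventually Q sequentially"
  obtains n p where "strict_mono n" "strict_mono p" "p 0 = start" "\<And>j. Q (n j)"
    "\<And>j. norm (Y (n j) - proj_on (block p j) (Y (n j))) \<le> \<epsilon> * (1/2)^(Suc j)"
    "\<And>j. \<bar>total_sum (proj_on (block p j) (Y (n j))) - \<delta>\<bar> \<le> 2 * \<epsilon> * (1/2)^(Suc j)"
proof -
  define \<eta> where "\<eta> j = \<epsilon> * (1/2::real)^(Suc j)" for j
  have \<eta>: "0 < \<eta> j" for j unfolding \<eta>_def using \<epsilon> by simp
  have ev: "eventually (\<lambda>n. Q n \<and> \<bar>total_sum (Y n) - \<delta>\<bar> \<le> \<eta> j) sequentially" for j
  proof -
    have "(\<lambda>n. \<bar>total_sum (Y n) - \<delta>\<bar>) \<longlonglongrightarrow> \<bar>\<delta> - \<delta>\<bar>"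
      by (intro tendsto_rabs tendsto_diff total tendsto_const)
    then have "eventually (\<lambda>n. \<bar>total_sum (Y n) - \<delta>\<bar> < \<eta> j) sequentially"
      using \<eta>[of j] by (intro order_tendstoD) auto
    with Q show ?thesis by eventually_elim auto
  qed
  obtain n p where np: "strict_mono n" "strict_mono p" "p 0 = start"
    "\<And>j. Q (n j) \<and> \<bar>total_sum (Y (n j)) - \<delta>\<bar> \<le> \<eta> j"
    "\<And>j. norm (Y (n j) - proj_on (block p j) (Y (n j))) \<le> \<eta> j"
    using extract_block_subsequence[where Y = Y and \<eta> = \<eta> and start = start
        and Q = "\<lambda>j n. Q n \<and> \<bar>total_sum (Y n) - \<delta>\<bar> \<le> \<eta> j", OF coord \<eta> ev] by blast
  have "\<bar>total_sum (proj_on (block p j) (Y (n j))) - \<delta>\<bar> \<le> 2 * \<eta> j" for j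
  proof -
    have "total_sum (proj_on (block p j) (Y (n j)))
        = total_sum (Y (n j)) - total_sum (Y (n j) - proj_on (block p j) (Y (n j)))"
      by (simp add: linear_diff[OF bounded_linear.linear[OF bounded_linear_total_sum]])
    moreover have "\<bar>total_sum (Y (n j) - proj_on (block p j) (Y (n j)))\<bar> \<le> \<eta> j"
      using abs_total_sum_le_norm np(5)[of j] by (rule order_trans)
    ultimately show ?thesis using np(4)[of j] by (simp add: abs_le_iff)
  qed
  with np show ?thesis using that by (simp add: \<eta>_def mult.assoc)
qed

lemma nat_sq_le_linear_imp_nonpos:
  fixes a b c :: real
  assumes "\<And>m::nat. (real m)^2 * a \<le> b + c * real m"
  shows "a \<le> 0"
proof (rule ccontr)
  assume "\<not> a \<le> 0"
  obtain m :: nat where m0: "max 1 ((\<bar>b\<bar> + \<bar>c\<bar>) / a) < real m"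
    using reals_Archimedean2 by blast
  then have m: "(\<bar>b\<bar> + \<bar>c\<bar>) / a < real m" "1 \<le> real m" by auto
  then have "real m * (\<bar>b\<bar> + \<bar>c\<bar>) < real m * (real m * a)"
    using \<open>\<not> a \<le> 0\<close> by (intro mult_strict_left_mono) (simp_all add: field_simps)
  moreover have "b \<le> real m * \<bar>b\<bar>" "c * real m \<le> real m * \<bar>c\<bar>"
    using m(2) mult_right_mono[OF m(2) abs_ge_zero[of b]] by (auto simp: mult.commute intro: mult_left_mono)
  then have "b + c * real m \<le> real m * (\<bar>b\<bar> + \<bar>c\<bar>)" by (simp add: distrib_left)
  ultimately show False using assms[of m] by (simp add: power2_eq_square mult.assoc)
qed

lemma weakly_null_if_total_sum_null:
  fixes Y :: "nat \<Rightarrow> james" and g :: "james \<Rightarrow> real"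
  assumes coord: "\<And>k. (\<lambda>n. Rep_james (Y n) k) \<longlonglongrightarrow> 0"
    and bnd: "\<And>n. norm (Y n) \<le> K"
    and total: "(\<lambda>n. total_sum (Y n)) \<longlonglongrightarrow> 0"
    and g: "bounded_linear g"
    and gY: "(\<lambda>n. g (Y n)) \<longlonglongrightarrow> \<beta>"
  shows "\<beta> = 0"
proof (rule ccontr)
  assume "\<beta> \<noteq> 0"
  then have "0 < \<beta>^2" by simp
  then have "\<beta>^2 / 2 < \<beta> * \<beta>" by (simp add: power2_eq_square)
  then have "eventually (\<lambda>n. \<beta>^2 / 2 < \<beta> * g (Y n)) sequentially"
    by (rule order_tendstoD(1)[OF tendsto_mult_left[OF gY]])
  then have "eventually (\<lambda>n. \<beta>^2 / 2 \<le> \<beta> * g (Y n)) sequentially"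
    by (rule eventually_mono) simp
  then obtain n p where "strict_mono n" "strict_mono p" "p 0 = 0" "\<And>j. \<beta>^2 / 2 \<le> \<beta> * g (Y (n j))"
    "\<And>j. norm (Y (n j) - proj_on (block p j) (Y (n j))) \<le> 1 * (1/2)^(Suc j)"
    "\<And>j. \<bar>total_sum (proj_on (block p j) (Y (n j))) - 0\<bar> \<le> 2 * 1 * (1/2)^(Suc j)"
    by (rule almost_block_subsequence[OF coord total zero_less_one, where start = 0]) blast
  then have np: "strict_mono p" "\<And>j. \<beta>^2 / 2 \<le> \<beta> * g (Y (n j))"
    "\<And>j. norm (Y (n j) - proj_on (block p j) (Y (n j))) \<le> (1/2)^(Suc j)"
    "\<And>j. \<bar>total_sum (proj_on (block p j) (Y (n j)))\<bar> \<le> 2 * (1/2)^(Suc j)"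
    by simp_all
  define U where "U j = proj_on (block p j) (Y (n j))" for j
  have K: "0 \<le> K" using bnd[of 0] norm_ge_zero[of "Y 0"] by linarith
  have supp: "Rep_james (U j) k = 0" if "k \<notin> block p j" for j k
    using that by (simp add: U_def Rep_proj_on_apply nat_convex_block)
  have sq: "(norm (\<Sum>j<N. U j))^2 \<le> 8 + 4 * real N * K^2" for N
  proof -
    have "norm (basis_comb N (\<lambda>j. 1 * total_sum (U j))) \<le> (\<Sum>j<N. \<bar>total_sum (U j)\<bar>)"
      using norm_basis_comb_le_l1 by simp
    also have "\<dots> \<le> (\<Sum>j<N. 2 * (1/2)^(Suc j))"
      unfolding U_def by (intro sum_mono np(4))
    also have "\<dots> = 2 * (\<Sum>j<N. (1/2::real)^(Suc j))" by (rule sum_distrib_left[symmetric])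
    also have "\<dots> \<le> 2" using sum_half_powers_le_1[of N] by linarith
    finally have "(norm (basis_comb N (\<lambda>j. 1 * total_sum (U j))))^2 \<le> 2^2"
      by (rule power_mono) simp
    moreover have "(\<Sum>j<N. 1^2 * (norm (U j))^2) \<le> (\<Sum>j<N. K^2)"
    proof (rule sum_mono)
      fix j
      have "norm (U j) \<le> K"
        unfolding U_def by (rule order_trans[OF norm_proj_on_le[OF nat_convex_block] bnd])
      then show "1^2 * (norm (U j))^2 \<le> K^2" by (simp add: power_mono)
    qed
    moreover have "(norm (\<Sum>j<N. 1 *\<^sub>R U j))^2
      \<le> 2 * (norm (basis_comb N (\<lambda>j. 1 * total_sum (U j))))^2 + 4 * (\<Sum>j<N. 1^2 * (norm (U j))^2)"
      by (rule norm_sum_blocks_sq_le[OF np(1) supp])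
    ultimately show ?thesis by simp
  qed
  have U_sum: "norm (\<Sum>j<m^2. U j) \<le> 3 + 2 * K * real m" for m
  proof (rule power2_le_imp_le)
    define t where "t = K * real m"
    have "0 \<le> t" using K by (simp add: t_def)
    moreover have "(3 + 2 * t)^2 = 9 + 12 * t + 4 * t^2" by (simp add: power2_eq_square algebra_simps)
    moreover have "real (m^2) * K^2 = t^2" by (simp add: t_def power_mult_distrib)
    ultimately have "8 + 4 * real (m^2) * K^2 \<le> (3 + 2 * t)^2" by linarith
    then show "(norm (\<Sum>j<m^2. U j))^2 \<le> (3 + 2 * K * real m)^2"
      using sq[of "m^2"] unfolding t_def by (simp add: mult.assoc)
  qed (use K in simp)
  obtain B where B: "0 < B" "\<And>x. norm (g x) \<le> norm x * B" using bounded_linear.pos_bounded[OF g] by blast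
  have "(real m)^2 * (\<beta>^2 / 2) \<le> \<bar>\<beta>\<bar> * B * 4 + \<bar>\<beta>\<bar> * B * 2 * K * real m" for m
  proof -
    let ?Z = "\<Sum>j<m^2. Y (n j)"
    have Z_eq: "?Z = (\<Sum>j<m^2. U j) + (\<Sum>j<m^2. Y (n j) - U j)"
      by (simp add: sum_subtractf)
    have "norm (\<Sum>j<m^2. Y (n j) - U j) \<le> (\<Sum>j<m^2. norm (Y (n j) - U j))"
      by (rule norm_sum)
    also have "\<dots> \<le> (\<Sum>j<m^2. (1/2)^(Suc j))"
      unfolding U_def by (intro sum_mono np(3))
    also have "\<dots> \<le> 1" by (rule sum_half_powers_le_1)
    finally have Z: "norm ?Z \<le> 4 + 2 * K * real m"
      unfolding Z_eq using norm_triangle_ineq[of "\<Sum>j<m^2. U j" "\<Sum>j<m^2. Y (n j) - U j"] U_sum[of m]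
      by linarith
    have "(real m)^2 * (\<beta>^2 / 2) \<le> (\<Sum>j<m^2. \<beta> * g (Y (n j)))"
      using sum_mono[of "{..<m^2}" "\<lambda>_. \<beta>^2 / 2", OF np(2)] by simp
    also have "\<dots> = \<beta> * g ?Z"
      by (simp add: linear_sum[OF bounded_linear.linear[OF g]] sum_distrib_left)
    also have "\<dots> \<le> \<bar>\<beta>\<bar> * \<bar>g ?Z\<bar>" using abs_ge_self[of "\<beta> * g ?Z"] by (simp add: abs_mult)
    also have "\<dots> \<le> \<bar>\<beta>\<bar> * (norm ?Z * B)"
      using B(2)[of ?Z] by (intro mult_left_mono) simp_all
    also have "\<dots> \<le> \<bar>\<beta>\<bar> * ((4 + 2 * K * real m) * B)"
      using Z B(1) by (intro mult_left_mono mult_right_mono) simp_all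
    finally show ?thesis by (simp add: algebra_simps)
  qed
  then have "\<beta>^2 / 2 \<le> 0" by (rule nat_sq_le_linear_imp_nonpos)
  with \<open>\<beta> \<noteq> 0\<close> show False by simp
qed

section \<open>Perturbations of block sequences\<close>

locale block_perturbation =
  fixes X :: "nat \<Rightarrow> james" and C :: james and U :: "nat \<Rightarrow> james" and p :: "nat \<Rightarrow> nat"
    and \<delta> \<epsilon> K :: real
  assumes strict_mono_p: "strict_mono p"
    and supp: "\<And>j k. k \<notin> block p j \<Longrightarrow> Rep_james (U j) k = 0"
    and X_close: "\<And>j. norm (X j - C - U j) \<le> \<epsilon> * (1/2)^(Suc j)"
    and U_bound: "\<And>j. norm (U j) \<le> K"
    and U_total: "\<And>j. \<bar>total_sum (U j) - \<delta>\<bar> \<le> 2 * \<epsilon> * (1/2)^(Suc j)"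
    and C_tail: "norm (proj_on {p 0..} C) \<le> \<epsilon>"
    and \<epsilon>_nonneg: "0 \<le> \<epsilon>"
begin

lemma K_nonneg: "0 \<le> K"
  using U_bound[of 0] norm_ge_zero[of "U 0"] by linarith

lemma lincomb_decomp:
  "(\<Sum>j<N. a j *\<^sub>R X j) = (\<Sum>j<N. a j) *\<^sub>R C + (\<Sum>j<N. a j *\<^sub>R U j) + (\<Sum>j<N. a j *\<^sub>R (X j - C - U j))"
proof -
  have "(\<Sum>j<N. a j) *\<^sub>R C + (\<Sum>j<N. a j *\<^sub>R U j) + (\<Sum>j<N. a j *\<^sub>R (X j - C - U j))
      = (\<Sum>j<N. a j *\<^sub>R C + a j *\<^sub>R U j + a j *\<^sub>R (X j - C - U j))"
    by (simp add: scaleR_sum_left sum.distrib)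
  also have "\<dots> = (\<Sum>j<N. a j *\<^sub>R X j)" by (simp add: algebra_simps)
  finally show ?thesis ..
qed

lemma norm_lincomb_err_le: "norm (\<Sum>j<N. a j *\<^sub>R (X j - C - U j)) \<le> \<epsilon> * norm (basis_comb N a)"
proof -
  have "(\<Sum>j<N. norm (X j - C - U j)) \<le> (\<Sum>j<N. \<epsilon> * (1/2)^(Suc j))"
    by (intro sum_mono X_close)
  also have "\<dots> = \<epsilon> * (\<Sum>j<N. (1/2)^(Suc j))" by (rule sum_distrib_left[symmetric])
  also have "\<dots> \<le> \<epsilon>"
    using mult_left_mono[OF sum_half_powers_le_1 \<epsilon>_nonneg, of N] by simp
  finally have S: "(\<Sum>j<N. norm (X j - C - U j)) \<le> \<epsilon>" .
  have "norm (\<Sum>j<N. a j *\<^sub>R (X j - C - U j)) \<le> norm (basis_comb N a) * (\<Sum>j<N. norm (X j - C - U j))"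
    by (rule norm_lincomb_le)
  also have "\<dots> \<le> norm (basis_comb N a) * \<epsilon>" by (rule mult_left_mono[OF S norm_ge_zero])
  finally show ?thesis by (simp add: mult.commute)
qed

lemma sum_total_sum_U_dev_le: "(\<Sum>j<N. \<bar>total_sum (U j) - \<delta>\<bar>) \<le> 2 * \<epsilon>"
proof -
  have "(\<Sum>j<N. \<bar>total_sum (U j) - \<delta>\<bar>) \<le> (\<Sum>j<N. 2 * \<epsilon> * (1/2)^(Suc j))"
    by (intro sum_mono U_total)
  also have "\<dots> = 2 * \<epsilon> * (\<Sum>j<N. (1/2)^(Suc j))" by (rule sum_distrib_left[symmetric])
  also have "\<dots> \<le> 2 * \<epsilon>"
    using mult_left_mono[OF sum_half_powers_le_1, of "2 * \<epsilon>" N] \<epsilon>_nonneg by simp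
  finally show ?thesis .
qed

lemma norm_basis_comb_total_sum_U:
  "\<bar>norm (basis_comb N (\<lambda>j. a j * total_sum (U j))) - \<bar>\<delta>\<bar> * norm (basis_comb N a)\<bar>
    \<le> 2 * \<epsilon> * norm (basis_comb N a)"
  using norm_basis_comb_weighted[where N = N and a = a and w = "\<lambda>j. total_sum (U j)" and c = \<delta>]
    mult_left_mono[OF sum_total_sum_U_dev_le[of N] norm_ge_zero[of "basis_comb N a"]]
  by (simp add: mult.commute)

lemma norm_block_sums_C: "norm (block_sums p C) \<le> \<epsilon>"
  using norm_block_sums_le[OF strict_mono_p, of "proj_on {p 0..} C"] C_tail block_sums_proj_on_tail[OF strict_mono_p]
  by simp

text \<open>The block sums of \<open>\<Sum>\<^sub>j a\<^sub>j X\<^sub>j\<close> are close to \<open>\<delta> a\<close>: this is the lower estimate,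
  and it makes the approximate projection below nearly the identity.\<close>

lemma norm_block_sums_lincomb_diff:
  "norm (block_sums p (\<Sum>j<N. a j *\<^sub>R X j) - \<delta> *\<^sub>R basis_comb N a) \<le> 4 * \<epsilon> * norm (basis_comb N a)"
proof -
  let ?A = "norm (basis_comb N a)"
  note lincomb_decomp[where N = N and a = a]
  moreover have lin: "linear (block_sums p)" by (rule bounded_linear.linear[OF bounded_linear_block_sums[OF strict_mono_p]])
  ultimately have "block_sums p (\<Sum>j<N. a j *\<^sub>R X j) - \<delta> *\<^sub>R basis_comb N a
      = (\<Sum>j<N. a j) *\<^sub>R block_sums p C + (basis_comb N (\<lambda>j. a j * total_sum (U j)) - \<delta> *\<^sub>R basis_comb N a)
        + block_sums p (\<Sum>j<N. a j *\<^sub>R (X j - C - U j))"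
    by (simp add: linear_add[OF lin] linear_scale[OF lin] linear_sum[OF lin]
        block_sums_block_supported[OF strict_mono_p supp] basis_comb_def scaleR_sum_right)
  also have "norm \<dots> \<le> ?A * \<epsilon> + 2 * \<epsilon> * ?A + \<epsilon> * ?A"
  proof (intro norm_triangle_le add_mono)
    show "norm ((\<Sum>j<N. a j) *\<^sub>R block_sums p C) \<le> ?A * \<epsilon>"
      using abs_sum_coeffs_le_norm_basis_comb[where N = N and a = a] norm_block_sums_C by (simp add: mult_mono)
    have "basis_comb N (\<lambda>j. a j * total_sum (U j)) - \<delta> *\<^sub>R basis_comb N a
        = basis_comb N (\<lambda>j. (total_sum (U j) - \<delta>) * a j)"
      by (simp add: basis_comb_def scaleR_sum_right sum_subtractf[symmetric] algebra_simps)
    also have "norm \<dots> \<le> ?A * (\<Sum>j<N. \<bar>total_sum (U j) - \<delta>\<bar>)"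
      by (rule norm_basis_comb_mult_le)
    also have "\<dots> \<le> 2 * \<epsilon> * ?A"
      using mult_left_mono[OF sum_total_sum_U_dev_le[of N] norm_ge_zero[of "basis_comb N a"]]
      by (simp add: mult.commute)
    finally show "norm (basis_comb N (\<lambda>j. a j * total_sum (U j)) - \<delta> *\<^sub>R basis_comb N a) \<le> 2 * \<epsilon> * ?A" .
    show "norm (block_sums p (\<Sum>j<N. a j *\<^sub>R (X j - C - U j))) \<le> \<epsilon> * ?A"
      using norm_block_sums_le[OF strict_mono_p] norm_lincomb_err_le order_trans by blast
  qed
  finally show ?thesis by (simp add: algebra_simps)
qed

lemma lower_estimate: "(\<bar>\<delta>\<bar> - 4 * \<epsilon>) * norm (basis_comb N a) \<le> norm (\<Sum>j<N. a j *\<^sub>R X j)"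
  using norm_block_sums_lincomb_diff[where N = N and a = a] norm_block_sums_le[OF strict_mono_p, of "\<Sum>j<N. a j *\<^sub>R X j"]
    norm_triangle_ineq2[of "\<delta> *\<^sub>R basis_comb N a" "block_sums p (\<Sum>j<N. a j *\<^sub>R X j)"]
  by (simp add: norm_minus_commute algebra_simps)

definition upper_const :: real where
  "upper_const = norm C + 2 * \<bar>\<delta>\<bar> + 5 * \<epsilon> + 2 * K"

lemma upper_const_nonneg: "0 \<le> upper_const"
  unfolding upper_const_def using \<epsilon>_nonneg K_nonneg by simp

lemma norm_lincomb_U_le: "norm (\<Sum>j<N. a j *\<^sub>R U j) \<le> (2 * \<bar>\<delta>\<bar> + 4 * \<epsilon> + 2 * K) * norm (basis_comb N a)"
proof -
  let ?A = "norm (basis_comb N a)"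
  define x where "x = (\<bar>\<delta>\<bar> + 2 * \<epsilon>) * ?A"
  define y where "y = K * ?A"
  have xy: "0 \<le> x" "0 \<le> y" using \<epsilon>_nonneg K_nonneg by (simp_all add: x_def y_def)
  have "norm (basis_comb N (\<lambda>j. a j * total_sum (U j))) \<le> x"
    using norm_basis_comb_total_sum_U[where N = N and a = a] unfolding x_def abs_le_iff distrib_right
    by linarith
  then have "(norm (basis_comb N (\<lambda>j. a j * total_sum (U j))))^2 \<le> x^2"
    by (rule power_mono) simp
  moreover have "(\<Sum>j<N. (a j)^2 * (norm (U j))^2) \<le> y^2"
  proof -
    have "(\<Sum>j<N. (a j)^2 * (norm (U j))^2) \<le> (\<Sum>j<N. (a j)^2 * K^2)"
      using U_bound by (intro sum_mono mult_left_mono power_mono) simp_all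
    also have "\<dots> = K^2 * (\<Sum>j<N. (a j)^2)" by (simp add: sum_distrib_left mult.commute)
    also have "\<dots> \<le> K^2 * ?A^2"
      by (rule mult_left_mono[OF sum_squares_coeffs_le_norm_basis_comb]) simp
    finally show ?thesis by (simp add: y_def power_mult_distrib)
  qed
  ultimately have "(norm (\<Sum>j<N. a j *\<^sub>R U j))^2 \<le> 2 * x^2 + 4 * y^2"
    using norm_sum_blocks_sq_le[where p = p and U = U and N = N and a = a, OF strict_mono_p supp] by linarith
  also have "\<dots> \<le> (2 * x + 2 * y)^2"
  proof -
    have "(2 * x + 2 * y)^2 = 4 * x^2 + 8 * (x * y) + 4 * y^2" by (simp add: power2_eq_square algebra_simps)
    then show ?thesis using mult_nonneg_nonneg[OF xy] zero_le_power2[of x] by linarith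
  qed
  finally have "norm (\<Sum>j<N. a j *\<^sub>R U j) \<le> 2 * x + 2 * y"
    by (rule power2_le_imp_le) (use xy in simp)
  also have "2 * x + 2 * y = (2 * \<bar>\<delta>\<bar> + 4 * \<epsilon> + 2 * K) * ?A"
    by (simp add: x_def y_def algebra_simps)
  finally show ?thesis .
qed

lemma upper_estimate: "norm (\<Sum>j<N. a j *\<^sub>R X j) \<le> upper_const * norm (basis_comb N a)"
proof -
  let ?A = "norm (basis_comb N a)"
  have "norm (\<Sum>j<N. a j *\<^sub>R X j)
      = norm ((\<Sum>j<N. a j) *\<^sub>R C + (\<Sum>j<N. a j *\<^sub>R U j) + (\<Sum>j<N. a j *\<^sub>R (X j - C - U j)))"
    by (simp only: lincomb_decomp[symmetric])
  also have "\<dots> \<le> ?A * norm C + (2 * \<bar>\<delta>\<bar> + 4 * \<epsilon> + 2 * K) * ?A + \<epsilon> * ?A"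
  proof (intro norm_triangle_le add_mono)
    show "norm ((\<Sum>j<N. a j) *\<^sub>R C) \<le> ?A * norm C"
      using abs_sum_coeffs_le_norm_basis_comb[where N = N and a = a] by (simp add: mult_right_mono)
  qed (rule norm_lincomb_U_le, rule norm_lincomb_err_le)
  finally show ?thesis by (simp add: upper_const_def algebra_simps)
qed

end

lemma basis_comb_Rep_james: "basis_comb N (Rep_james a) = proj_on {..<N} a"
  by (rule james_eqI) (simp add: Rep_basis_comb trunc_def Rep_proj_on_apply nat_convex_lessThan)

lemma lincomb_Rep_proj_on_atLeast:
  fixes V :: "nat \<Rightarrow> 'a::real_vector"
  shows "(\<Sum>j<n. Rep_james (proj_on {m..} a) j *\<^sub>R V j) = (\<Sum>j\<in>{m..<n}. Rep_james a j *\<^sub>R V j)"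
proof -
  have "(\<Sum>j<n. Rep_james (proj_on {m..} a) j *\<^sub>R V j) = (\<Sum>j<n. if j \<in> {m..} then Rep_james a j *\<^sub>R V j else 0)"
    by (intro sum.cong) (simp_all add: Rep_proj_on_apply nat_convex_atLeast)
  also have "\<dots> = (\<Sum>j\<in>{..<n} \<inter> {m..}. Rep_james a j *\<^sub>R V j)"
    by (simp add: sum.inter_restrict)
  also have "{..<n} \<inter> {m..} = {m..<n}" by auto
  finally show ?thesis .
qed

lemma lincomb_pad:
  fixes V :: "nat \<Rightarrow> 'a::real_vector"
  shows "N \<le> M \<Longrightarrow> (\<Sum>j<N. a j *\<^sub>R V j) = (\<Sum>j<M. (if j < N then a j else 0) *\<^sub>R V j)"
  by (intro sum.mono_neutral_cong_left) auto

lemma span_range_eq_lincombs: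
  fixes V :: "nat \<Rightarrow> 'a::real_vector"
  shows "span (range V) = {\<Sum>j<N. a j *\<^sub>R V j | a N. True}"
proof
  let ?L = "{\<Sum>j<N. a j *\<^sub>R V j | a N. True}"
  show "?L \<subseteq> span (range V)"
    by (auto intro: span_sum[OF span_scale[OF span_base[OF rangeI]]])
  have "subspace ?L"
    unfolding subspace_def
  proof (intro conjI ballI allI)
    show "0 \<in> ?L" by (intro CollectI exI[of _ "\<lambda>_. 0"] exI[of _ 0]) simp
    fix x y assume "x \<in> ?L" "y \<in> ?L"
    then obtain a N b M where x: "x = (\<Sum>j<N. a j *\<^sub>R V j)" and y: "y = (\<Sum>j<M. b j *\<^sub>R V j)" by blast
    have "x + y = (\<Sum>j<max N M. ((if j < N then a j else 0) + (if j < M then b j else 0)) *\<^sub>R V j)"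
      using lincomb_pad[where N = N and M = "max N M" and a = a and V = V]
        lincomb_pad[where N = M and M = "max N M" and a = b and V = V]
      unfolding x y by (simp add: scaleR_add_left sum.distrib)
    then show "x + y \<in> ?L"
      by (intro CollectI exI[of _ "\<lambda>j. (if j < N then a j else 0) + (if j < M then b j else 0)"]
          exI[of _ "max N M"]) simp
  next
    fix c x assume "x \<in> ?L"
    then obtain a N where "x = (\<Sum>j<N. a j *\<^sub>R V j)" by blast
    then have "c *\<^sub>R x = (\<Sum>j<N. (c * a j) *\<^sub>R V j)" by (simp add: scaleR_sum_right)
    then show "c *\<^sub>R x \<in> ?L" by (intro CollectI exI[of _ "\<lambda>j. c * a j"] exI[of _ N]) simp
  qed
  moreover have "range V \<subseteq> ?L"
  proof
    fix x assume "x \<in> range V"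
    then obtain i where "x = V i" by blast
    then have "x = (\<Sum>j<Suc i. (if j = i then 1 else 0) *\<^sub>R V j)" by (simp add: if_distrib cong: if_cong)
    then show "x \<in> ?L" by (intro CollectI exI[of _ "\<lambda>j. if j = i then 1 else 0"] exI[of _ "Suc i"]) simp
  qed
  ultimately show "span (range V) \<subseteq> ?L" by (simp add: span_minimal)
qed

context block_perturbation
begin

lemma summable_synth: "summable (\<lambda>j. Rep_james a j *\<^sub>R X j)"
  unfolding summable_Cauchy
proof (intro allI impI)
  fix e :: real assume "0 < e"
  define e' where "e' = e / (2 * (upper_const + 1))"
  have "0 < e'" using \<open>0 < e\<close> upper_const_nonneg by (simp add: e'_def)
  then obtain M where M: "\<forall>q\<ge>M. norm (proj_on {q..} a) \<le> e'"
    using tail_norm_small by blast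
  have "norm (\<Sum>j\<in>{m..<n}. Rep_james a j *\<^sub>R X j) < e" if "M \<le> m" for m n
  proof -
    have "norm (\<Sum>j\<in>{m..<n}. Rep_james a j *\<^sub>R X j)
        \<le> upper_const * norm (basis_comb n (Rep_james (proj_on {m..} a)))"
      using upper_estimate[where N = n and a = "Rep_james (proj_on {m..} a)"]
      by (simp add: lincomb_Rep_proj_on_atLeast)
    also have "\<dots> \<le> upper_const * e'"
      using order_trans[OF norm_proj_on_le[OF nat_convex_lessThan] M[rule_format, OF that]] upper_const_nonneg
      by (intro mult_left_mono) (simp_all add: basis_comb_Rep_james)
    also have "\<dots> < e"
      using \<open>0 < e\<close> upper_const_nonneg by (simp add: e'_def field_simps add_pos_nonneg)
    finally show ?thesis .
  qed
  then show "\<exists>M. \<forall>m\<ge>M. \<forall>n. norm (\<Sum>j\<in>{m..<n}. Rep_james a j *\<^sub>R X j) < e" by blast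
qed

definition synth :: "james \<Rightarrow> james" where
  "synth a = (\<Sum>j. Rep_james a j *\<^sub>R X j)"

lemma synth_partial_sums: "(\<lambda>n. \<Sum>j<n. Rep_james a j *\<^sub>R X j) \<longlonglongrightarrow> synth a"
  unfolding synth_def by (rule summable_LIMSEQ[OF summable_synth])

lemma norm_synth_le: "norm (synth a) \<le> upper_const * norm a"
proof (rule tendsto_upperbound[OF tendsto_norm[OF synth_partial_sums]])
  show "\<forall>\<^sub>F n in sequentially. norm (\<Sum>j<n. Rep_james a j *\<^sub>R X j) \<le> upper_const * norm a"
  proof (intro always_eventually allI)
    fix n
    have "norm (\<Sum>j<n. Rep_james a j *\<^sub>R X j) \<le> upper_const * norm (proj_on {..<n} a)"
      using upper_estimate[where N = n and a = "Rep_james a"] by (simp add: basis_comb_Rep_james)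
    also have "\<dots> \<le> upper_const * norm a"
      by (intro mult_left_mono norm_proj_on_le nat_convex_lessThan upper_const_nonneg)
    finally show "norm (\<Sum>j<n. Rep_james a j *\<^sub>R X j) \<le> upper_const * norm a" .
  qed
qed simp

lemma bounded_linear_synth: "bounded_linear synth"
proof (rule bounded_linear_intro[where K = upper_const])
  show "synth (x + y) = synth x + synth y" for x y
    unfolding synth_def by (simp add: scaleR_add_left suminf_add[OF summable_synth summable_synth])
  show "synth (r *\<^sub>R x) = r *\<^sub>R synth x" for r x
    unfolding synth_def by (simp add: suminf_scaleR_right[OF summable_synth])
  show "norm (synth x) \<le> norm x * upper_const" for x
    using norm_synth_le by (simp add: mult.commute)
qed

lemma synth_basis_comb: "synth (basis_comb N c) = (\<Sum>j<N. c j *\<^sub>R X j)"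
proof -
  have "synth (basis_comb N c) = (\<Sum>j<N. Rep_james (basis_comb N c) j *\<^sub>R X j)"
    unfolding synth_def by (rule suminf_finite) (auto simp: Rep_basis_comb trunc_def)
  then show ?thesis by (simp add: Rep_basis_comb trunc_def)
qed

lemma synth_in_closure_span: "synth a \<in> closure (span (range X))"
  unfolding closure_sequential
  by (intro exI[of _ "\<lambda>n. \<Sum>j<n. Rep_james a j *\<^sub>R X j"] conjI allI synth_partial_sums)
    (auto intro: span_sum[OF span_scale[OF span_base[OF rangeI]]])

text \<open>Rescaled block sums followed by synthesis: since the block sums of \<open>\<Sum>\<^sub>j a\<^sub>j X\<^sub>j\<close> are
  close to \<open>\<delta> a\<close>, this is close to the identity on the span of the \<open>X j\<close>.\<close>

definition approx_proj :: "james \<Rightarrow> james" where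
  "approx_proj x = synth ((1 / \<delta>) *\<^sub>R block_sums p x)"

lemma bounded_linear_approx_proj: "bounded_linear approx_proj"
  unfolding approx_proj_def
  by (intro bounded_linear_compose[OF bounded_linear_synth]
      bounded_linear_compose[OF bounded_linear_scaleR_right bounded_linear_block_sums[OF strict_mono_p]])

lemma approx_proj_in_closure_span: "approx_proj x \<in> closure (span (range X))"
  unfolding approx_proj_def by (rule synth_in_closure_span)

end

locale small_block_perturbation = block_perturbation +
  assumes \<delta>_nonzero: "\<delta> \<noteq> 0"
    and \<epsilon>_small: "8 * \<epsilon> \<le> \<bar>\<delta>\<bar>"
    and \<epsilon>_upper_const: "16 * upper_const * \<epsilon> \<le> \<delta>^2"
begin

lemma lower_estimate': "norm (basis_comb N a) \<le> (2 / \<bar>\<delta>\<bar>) * norm (\<Sum>j<N. a j *\<^sub>R X j)"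
proof -
  have "(\<bar>\<delta>\<bar> / 2) * norm (basis_comb N a) \<le> (\<bar>\<delta>\<bar> - 4 * \<epsilon>) * norm (basis_comb N a)"
    using \<epsilon>_small by (intro mult_right_mono) simp_all
  also have "\<dots> \<le> norm (\<Sum>j<N. a j *\<^sub>R X j)" by (rule lower_estimate)
  finally show ?thesis using \<delta>_nonzero by (simp add: field_simps)
qed

lemma approx_proj_near_id_lincomb:
  "norm (approx_proj (\<Sum>j<N. a j *\<^sub>R X j) - (\<Sum>j<N. a j *\<^sub>R X j)) \<le> norm (\<Sum>j<N. a j *\<^sub>R X j) / 2"
proof -
  let ?y = "\<Sum>j<N. a j *\<^sub>R X j" and ?A = "norm (basis_comb N a)"
  have "approx_proj ?y - ?y = synth ((1 / \<delta>) *\<^sub>R (block_sums p ?y - \<delta> *\<^sub>R basis_comb N a))"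
    using \<delta>_nonzero
    by (simp add: approx_proj_def synth_basis_comb[symmetric] scaleR_diff_right
        linear_diff[OF bounded_linear.linear[OF bounded_linear_synth]])
  also have "norm \<dots> \<le> upper_const * (4 * \<epsilon> * ?A / \<bar>\<delta>\<bar>)"
    using norm_block_sums_lincomb_diff[where N = N and a = a] \<delta>_nonzero
    by (intro order_trans[OF norm_synth_le] mult_left_mono upper_const_nonneg) (simp add: divide_right_mono)
  also have "\<dots> \<le> upper_const * (4 * \<epsilon> * ((2 / \<bar>\<delta>\<bar>) * norm ?y) / \<bar>\<delta>\<bar>)"
    using lower_estimate'[where N = N and a = a] \<epsilon>_nonneg upper_const_nonneg
    by (intro mult_left_mono divide_right_mono) simp_all
  also have "\<dots> = (16 * upper_const * \<epsilon>) / \<delta>^2 * (norm ?y / 2)"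
    by (simp add: power2_eq_square field_simps)
  also have "\<dots> \<le> norm ?y / 2"
    using \<epsilon>_upper_const \<delta>_nonzero upper_const_nonneg \<epsilon>_nonneg
    by (intro mult_left_le_one_le) (simp_all add: divide_le_eq_1)
  finally show ?thesis .
qed

lemma approx_proj_near_id: "y \<in> closure (span (range X)) \<Longrightarrow> norm (approx_proj y - y) \<le> norm y / 2"
proof -
  have "closed {y. norm (approx_proj y - y) \<le> norm y / 2}"
    using bounded_linear_approx_proj
    by (intro closed_Collect_le continuous_intros) (auto intro: linear_continuous_on)
  moreover have "span (range X) \<subseteq> {y. norm (approx_proj y - y) \<le> norm y / 2}"
    unfolding span_range_eq_lincombs using approx_proj_near_id_lincomb by blast
  ultimately show "y \<in> closure (span (range X)) \<Longrightarrow> norm (approx_proj y - y) \<le> norm y / 2"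
    using closure_minimal by blast
qed

end

section \<open>Projections onto closed subspaces from approximate projections\<close>

text \<open>If \<open>T\<close> maps into a closed subspace \<open>Y\<close> and is within \<open>1/2\<close> of the identity on \<open>Y\<close>,
  then \<open>T\<close> restricted to \<open>Y\<close> is invertible by a Neumann series, and
  \<open>P x = \<Sum>\<^sub>k (id - T)\<^sup>k (T x)\<close> is a bounded projection onto \<open>Y\<close>.\<close>

lemma bounded_linear_funpow:
  fixes f :: "'a::real_normed_vector \<Rightarrow> 'a"
  assumes "bounded_linear f"
  shows "bounded_linear (f ^^ k)"
proof (induction k)
  case 0
  show ?case by (simp add: id_def bounded_linear_ident)
next
  case (Suc k)
  show ?case using bounded_linear_compose[OF assms Suc] by simp
qed

lemma exists_projection_if_near_identity:
  fixes T :: "'a::banach \<Rightarrow> 'a"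
  assumes Y: "closed Y" "subspace Y" and T: "bounded_linear T" "\<And>x. T x \<in> Y"
    and near_id: "\<And>y. y \<in> Y \<Longrightarrow> norm (T y - y) \<le> norm y / 2"
  shows "\<exists>P. bounded_linear P \<and> (\<forall>x. P x \<in> Y) \<and> (\<forall>y\<in>Y. P y = y)"
proof -
  define D where "D z = z - T z" for z
  have D: "bounded_linear (D ^^ k)" for k
    unfolding D_def by (intro bounded_linear_funpow bounded_linear_sub bounded_linear_ident T(1))
  have D_Y: "(D ^^ k) y \<in> Y \<and> norm ((D ^^ k) y) \<le> (1/2)^k * norm y" if "y \<in> Y" for y k
  proof (induction k)
    case (Suc k)
    then have z: "(D ^^ k) y \<in> Y" "norm ((D ^^ k) y) \<le> (1/2)^k * norm y" by auto
    have "D ((D ^^ k) y) \<in> Y" using subspace_diff[OF Y(2) z(1) T(2)] by (simp add: D_def)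
    moreover have "norm (D ((D ^^ k) y)) \<le> norm ((D ^^ k) y) / 2"
      using near_id[OF z(1)] by (simp add: D_def norm_minus_commute)
    ultimately show ?case using z(2) by simp
  qed (simp add: that)
  have bound: "norm ((D ^^ k) (T x)) \<le> (1/2)^k * norm (T x)" for k x
    using D_Y[OF T(2)] by blast
  have geometric: "summable (\<lambda>k. (1/2::real)^k * c)" for c
    by (rule summable_mult2[OF summable_geometric]) simp
  have summable: "summable (\<lambda>k. (D ^^ k) (T x))" for x
    by (rule summable_comparison_test'[OF geometric bound])
  define P where "P x = (\<Sum>k. (D ^^ k) (T x))" for x
  have "bounded_linear P"
  proof (rule bounded_linear_intro[where K = "2 * onorm T"])
    have lin: "linear (D ^^ k)" for k by (rule bounded_linear.linear[OF D])
    have linT: "linear T" by (rule bounded_linear.linear[OF T(1)])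
    show "P (x + y) = P x + P y" for x y
      unfolding P_def by (simp add: linear_add[OF linT] linear_add[OF lin] suminf_add[OF summable summable])
    show "P (r *\<^sub>R x) = r *\<^sub>R P x" for r x
      unfolding P_def by (simp add: linear_scale[OF linT] linear_scale[OF lin] suminf_scaleR_right[OF summable])
    show "norm (P x) \<le> norm x * (2 * onorm T)" for x
    proof -
      have "norm (P x) \<le> (\<Sum>k. (1/2)^k * norm (T x))"
        unfolding P_def by (rule norm_suminf_le[OF bound geometric])
      also have "\<dots> = 2 * norm (T x)"
        using suminf_mult2[OF summable_geometric[of "1/2::real"], of "norm (T x)"] suminf_geometric[of "1/2::real"]
        by simp
      also have "\<dots> \<le> norm x * (2 * onorm T)"
        using onorm[OF T(1), of x] by (simp add: mult.commute)
      finally show ?thesis .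
    qed
  qed
  moreover have "P x \<in> Y" for x
  proof -
    have "(\<Sum>k<n. (D ^^ k) (T x)) \<in> Y" for n
      using D_Y[OF T(2)] by (intro subspace_sum[OF Y(2)]) blast
    moreover have "(\<lambda>n. \<Sum>k<n. (D ^^ k) (T x)) \<longlonglongrightarrow> P x"
      unfolding P_def by (rule summable_LIMSEQ[OF summable])
    ultimately show ?thesis by (rule closed_sequentially[OF Y(1)])
  qed
  moreover have "P y = y" if "y \<in> Y" for y
  proof -
    have lim: "(\<lambda>k. (D ^^ k) y) \<longlonglongrightarrow> 0"
    proof (rule tendsto_norm_zero_cancel, rule Lim_null_comparison)
      show "\<forall>\<^sub>F k in sequentially. norm (norm ((D ^^ k) y)) \<le> (1/2)^k * norm y"
        using D_Y[OF that] by simp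
      show "(\<lambda>k. (1/2::real)^k * norm y) \<longlonglongrightarrow> 0"
        by (intro tendsto_mult_left_zero LIMSEQ_power_zero) simp
    qed
    have "(D ^^ k) (T y) = (D ^^ k) y - (D ^^ Suc k) y" for k
    proof -
      have "T y = y - D y" by (simp add: D_def)
      then show ?thesis
        by (simp add: linear_diff[OF bounded_linear.linear[OF D]] funpow_swap1)
    qed
    moreover have "(\<lambda>k. (D ^^ k) y - (D ^^ Suc k) y) sums ((D ^^ 0) y - 0)"
      by (rule telescope_sums'[OF lim])
    ultimately have "(\<lambda>k. (D ^^ k) (T y)) sums y" by simp
    then show "P y = y" unfolding P_def by (rule sums_unique[symmetric])
  qed
  ultimately show ?thesis by blast
qed

lemma subspace_closure:
  fixes S :: "'a::real_normed_vector set"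
  assumes S: "subspace S"
  shows "subspace (closure S)"
  unfolding subspace_def
proof (intro conjI ballI allI)
  show "0 \<in> closure S" using subspace_0[OF S] closure_subset by blast
next
  fix x y assume "x \<in> closure S" "y \<in> closure S"
  then obtain f g where "\<forall>n. f n \<in> S" "f \<longlonglongrightarrow> x" "\<forall>n. g n \<in> S" "g \<longlonglongrightarrow> y"
    unfolding closure_sequential by blast
  then show "x + y \<in> closure S"
    unfolding closure_sequential using subspace_add[OF S]
    by (intro exI[of _ "\<lambda>n. f n + g n"]) (auto intro: tendsto_add)
next
  fix c x assume "x \<in> closure S"
  then obtain f where "\<forall>n. f n \<in> S" "f \<longlonglongrightarrow> x"
    unfolding closure_sequential by blast
  then show "c *\<^sub>R x \<in> closure S"
    unfolding closure_sequential using subspace_scale[OF S]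
    by (intro exI[of _ "\<lambda>n. c *\<^sub>R f n"]) (auto intro: tendsto_scaleR)
qed

lemma lincomb_Rep_james: "lincomb a (\<lambda>j. Rep_james (X j)) N = Rep_james (\<Sum>j<N. a j *\<^sub>R X j)"
  unfolding lincomb_def by (simp add: Rep_james_sum)

lemma lincomb_unitvec: "lincomb a unitvec N = Rep_james (basis_comb N a)"
  unfolding lincomb_def basis_comb_def by (simp add: Rep_james_sum Rep_basis_vec)

lemma equiv_unit_basis_if_estimates:
  fixes X :: "nat \<Rightarrow> james"
  assumes upper: "\<And>a N. norm (\<Sum>j<N. a j *\<^sub>R X j) \<le> A * norm (basis_comb N a)"
    and lower: "\<And>a N. norm (basis_comb N a) \<le> B * norm (\<Sum>j<N. a j *\<^sub>R X j)"
  shows "equiv_unit_basis (\<lambda>j. Rep_james (X j))"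
  unfolding equiv_unit_basis_def lincomb_Rep_james lincomb_unitvec norm_james_eq[symmetric]
proof (intro exI[of _ "max (max A B) 0 + 1"] conjI allI)
  fix a N
  show "norm (basis_comb N a) \<le> (max (max A B) 0 + 1) * norm (\<Sum>j<N. a j *\<^sub>R X j)"
    using lower[of N a] by (rule order_trans) (intro mult_right_mono; simp)
  show "norm (\<Sum>j<N. a j *\<^sub>R X j) \<le> (max (max A B) 0 + 1) * norm (basis_comb N a)"
    using upper[of a N] by (rule order_trans) (intro mult_right_mono; simp)
qed simp

lemma closed_span_eq_closure_span:
  "closed_span (\<lambda>j. Rep_james (X j)) = Rep_james ` closure (span (range X))"
proof -
  have ex: "(\<exists>y\<in>span (range X). dist y x < e) \<longleftrightarrow> (\<exists>a N. dist (\<Sum>j<N. a j *\<^sub>R X j) x < e)" for x e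
    unfolding span_range_eq_lincombs by blast
  have dist_eq: "jnorm (\<lambda>i. z i - lincomb a (\<lambda>j. Rep_james (X j)) N i) = dist (\<Sum>j<N. a j *\<^sub>R X j) (Abs_james z)"
    if "z \<in> James" for z a N
  proof -
    have "dist (\<Sum>j<N. a j *\<^sub>R X j) (Abs_james z) = norm (Abs_james z - (\<Sum>j<N. a j *\<^sub>R X j))"
      by (simp add: dist_norm norm_minus_commute)
    also have "\<dots> = jnorm (\<lambda>i. z i - lincomb a (\<lambda>j. Rep_james (X j)) N i)"
      using that by (simp add: norm_james_eq Rep_james_diff Abs_james_inverse lincomb_Rep_james)
    finally show ?thesis ..
  qed
  have key: "z \<in> closed_span (\<lambda>j. Rep_james (X j)) \<longleftrightarrow> Abs_james z \<in> closure (span (range X))"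
    if "z \<in> James" for z
    unfolding closed_span_def closure_approachable ex using that by (simp add: dist_eq)
  have sub: "closed_span (\<lambda>j. Rep_james (X j)) \<subseteq> James"
    unfolding closed_span_def by blast
  show ?thesis
  proof (intro set_eqI iffI)
    fix z assume z: "z \<in> closed_span (\<lambda>j. Rep_james (X j))"
    then have "z \<in> James" using sub by blast
    then have "z = Rep_james (Abs_james z)" "Abs_james z \<in> closure (span (range X))"
      using key z by (simp_all add: Abs_james_inverse)
    then show "z \<in> Rep_james ` closure (span (range X))" by (rule image_eqI)
  next
    fix z assume "z \<in> Rep_james ` closure (span (range X))"
    then obtain y where "y \<in> closure (span (range X))" "z = Rep_james y" by blast
    then show "z \<in> closed_span (\<lambda>j. Rep_james (X j))"
      using key[of z] Rep_james_in_James by (simp add: Rep_james_inverse)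
  qed
qed

lemma complemented_if_projection:
  assumes P: "bounded_linear P" "\<And>x. P x \<in> Y" "\<And>y. y \<in> Y \<Longrightarrow> P y = y"
  shows "complemented (Rep_james ` Y)"
  unfolding complemented_def
proof (intro exI[of _ "\<lambda>z. Rep_james (P (Abs_james z))"] conjI ballI allI)
  have lin: "linear P" by (rule bounded_linear.linear[OF P(1)])
  fix x assume x: "x \<in> James"
  show "Rep_james (P (Abs_james x)) \<in> James" by (rule Rep_james_in_James)
  show "Rep_james (P (Abs_james (\<lambda>i. c * x i))) = (\<lambda>i. c * Rep_james (P (Abs_james x)) i)" for c
    using x by (simp add: Abs_james_scaleR linear_scale[OF lin] Rep_james_scaleR)
  show "Rep_james (P (Abs_james (Rep_james (P (Abs_james x))))) = Rep_james (P (Abs_james x))"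
    by (simp add: Rep_james_inverse P(2,3))
  show "Rep_james (P (Abs_james (\<lambda>i. x i + y i))) = (\<lambda>i. Rep_james (P (Abs_james x)) i + Rep_james (P (Abs_james y)) i)"
    if "y \<in> James" for y
    using x that by (simp add: Abs_james_add linear_add[OF lin] Rep_james_add)
next
  obtain B where B: "\<And>x. norm (P x) \<le> norm x * B" using bounded_linear.bounded[OF P(1)] by blast
  show "\<exists>C. \<forall>x\<in>James. jnorm (Rep_james (P (Abs_james x))) \<le> C * jnorm x"
  proof (intro exI[of _ B] ballI)
    fix x assume "x \<in> James"
    then show "jnorm (Rep_james (P (Abs_james x))) \<le> B * jnorm x"
      using B[of "Abs_james x"] by (simp add: norm_james_eq Abs_james_inverse mult.commute)
  qed
next
  show "(\<lambda>z. Rep_james (P (Abs_james z))) ` James = Rep_james ` Y"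
  proof
    show "(\<lambda>z. Rep_james (P (Abs_james z))) ` James \<subseteq> Rep_james ` Y" using P(2) by blast
    show "Rep_james ` Y \<subseteq> (\<lambda>z. Rep_james (P (Abs_james z))) ` James"
    proof
      fix z assume "z \<in> Rep_james ` Y"
      then obtain y where "y \<in> Y" "z = Rep_james y" by blast
      then have "z = Rep_james (P (Abs_james (Rep_james y)))" by (simp add: Rep_james_inverse P(3))
      then show "z \<in> (\<lambda>z. Rep_james (P (Abs_james z))) ` James" using Rep_james_in_James by blast
    qed
  qed
qed

context small_block_perturbation
begin

theorem equiv_unit_basis: "equiv_unit_basis (\<lambda>j. Rep_james (X j))"
  by (rule equiv_unit_basis_if_estimates[OF upper_estimate lower_estimate'])

theorem complemented_closed_span: "complemented (closed_span (\<lambda>j. Rep_james (X j)))"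
proof -
  obtain P where P: "bounded_linear P" "\<forall>x. P x \<in> closure (span (range X))"
    "\<forall>y\<in>closure (span (range X)). P y = y"
    using exists_projection_if_near_identity[OF closed_closure subspace_closure[OF subspace_span]
        bounded_linear_approx_proj approx_proj_in_closure_span approx_proj_near_id]
    by blast
  show ?thesis
    unfolding closed_span_eq_closure_span by (rule complemented_if_projection[OF P(1)]) (use P in blast)+
qed

end

lemma weakly_cauchy_coordinatewise_limit:
  fixes X :: "nat \<Rightarrow> james"
  assumes conv: "\<And>g::james \<Rightarrow> real. bounded_linear g \<Longrightarrow> convergent (\<lambda>n. g (X n))"
  obtains C M where "\<And>k. (\<lambda>n. Rep_james (X n) k) \<longlonglongrightarrow> Rep_james C k" "\<And>n. norm (X n) \<le> M"
proof -
  obtain M where M: "\<And>n. norm (X n) \<le> M"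
    using weakly_convergent_imp_bounded[where X = X, OF norming_functional conv] by blast
  define c where "c k = lim (\<lambda>n. Rep_james (X n) k)" for k
  have c: "(\<lambda>n. Rep_james (X n) k) \<longlonglongrightarrow> c k" for k
    using conv[OF bounded_linear_coord] unfolding c_def convergent_LIMSEQ_iff .
  have "c \<in> James"
    using M by (intro James_coordinatewise_limit(1)[OF c Rep_james_in_James, of M])
      (simp add: norm_james_eq[symmetric])
  then show ?thesis using that[of "Abs_james c" M] c M by (simp add: Abs_james_inverse)
qed

lemma weak_limit_eq_if_total_sum_converges:
  fixes X :: "nat \<Rightarrow> james" and g :: "james \<Rightarrow> real"
  assumes coord: "\<And>k. (\<lambda>n. Rep_james (X n) k) \<longlonglongrightarrow> Rep_james C k" and M: "\<And>n. norm (X n) \<le> M"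
    and total: "(\<lambda>n. total_sum (X n)) \<longlonglongrightarrow> total_sum C"
    and g: "bounded_linear g" and gX: "(\<lambda>n. g (X n)) \<longlonglongrightarrow> L"
  shows "L = g C"
proof -
  have lin_total: "linear total_sum" and lin_g: "linear g"
    using bounded_linear_total_sum g by (simp_all add: bounded_linear.linear)
  have "(\<lambda>n. Rep_james (X n - C) k) \<longlonglongrightarrow> 0" for k
    using tendsto_diff[OF coord[of k] tendsto_const[of "Rep_james C k"]] by simp
  moreover have "norm (X n - C) \<le> M + norm C" for n
    using norm_triangle_ineq4[of "X n" C] M[of n] by linarith
  moreover have "(\<lambda>n. total_sum (X n - C)) \<longlonglongrightarrow> 0"
    using tendsto_diff[OF total tendsto_const[of "total_sum C"]] by (simp add: linear_diff[OF lin_total])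
  moreover have "(\<lambda>n. g (X n - C)) \<longlonglongrightarrow> L - g C"
    using tendsto_diff[OF gX tendsto_const[of "g C"]] by (simp add: linear_diff[OF lin_g])
  ultimately have "L - g C = 0" by (rule weakly_null_if_total_sum_null[OF _ _ _ g])
  then show ?thesis by simp
qed

lemma block_perturbation_subsequence:
  fixes X :: "nat \<Rightarrow> james"
  assumes coord: "\<And>k. (\<lambda>n. Rep_james (X n) k) \<longlonglongrightarrow> Rep_james C k" and M: "\<And>n. norm (X n) \<le> M"
    and total: "(\<lambda>n. total_sum (X n)) \<longlonglongrightarrow> total_sum C + \<delta>" and \<delta>: "\<delta> \<noteq> 0"
  obtains n where "strict_mono n" "equiv_unit_basis (\<lambda>j. Rep_james (X (n j)))"
    "complemented (closed_span (\<lambda>j. Rep_james (X (n j))))"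
proof -
  define K where "K = M + norm C"
  have K: "norm (X n - C) \<le> K" for n
    using norm_triangle_ineq4[of "X n" C] M[of n] unfolding K_def by linarith
  then have "0 \<le> K" using norm_ge_zero order_trans by blast
  define Cb where "Cb = norm C + 2 * \<bar>\<delta>\<bar> + 5 + 2 * K"
  have "0 \<le> Cb" unfolding Cb_def using \<open>0 \<le> K\<close> by simp
  define \<epsilon> where "\<epsilon> = min 1 (min (\<bar>\<delta>\<bar> / 8) (\<delta>^2 / (16 * Cb + 1)))"
  have "\<epsilon> \<le> 1" "\<epsilon> \<le> \<bar>\<delta>\<bar> / 8" "\<epsilon> \<le> \<delta>^2 / (16 * Cb + 1)"
    unfolding \<epsilon>_def by (meson min.cobounded1 min.cobounded2 order_trans)+
  moreover have "0 < \<epsilon>" using \<delta> \<open>0 \<le> Cb\<close> by (simp add: \<epsilon>_def)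
  ultimately have eps: "0 < \<epsilon>" "\<epsilon> \<le> 1" "8 * \<epsilon> \<le> \<bar>\<delta>\<bar>" "\<epsilon> * (16 * Cb + 1) \<le> \<delta>^2"
    using \<open>0 \<le> Cb\<close> by (simp_all add: pos_le_divide_eq)
  obtain start where start: "\<forall>q\<ge>start. norm (proj_on {q..} C) \<le> \<epsilon>"
    using tail_norm_small[OF eps(1)] by blast
  have coord_diff: "(\<lambda>n. Rep_james (X n - C) k) \<longlonglongrightarrow> 0" for k
    using tendsto_diff[OF coord[of k] tendsto_const[of "Rep_james C k"]] by simp
  have total_diff: "(\<lambda>n. total_sum (X n - C)) \<longlonglongrightarrow> \<delta>"
    using tendsto_diff[OF total tendsto_const[of "total_sum C"]]
    by (simp add: linear_diff[OF bounded_linear.linear[OF bounded_linear_total_sum]])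
  obtain n p where n: "strict_mono n" and blocks: "strict_mono p" "p 0 = start"
    and close: "\<And>j. norm (X (n j) - C - proj_on (block p j) (X (n j) - C)) \<le> \<epsilon> * (1/2)^(Suc j)"
    and total_U: "\<And>j. \<bar>total_sum (proj_on (block p j) (X (n j) - C)) - \<delta>\<bar> \<le> 2 * \<epsilon> * (1/2)^(Suc j)"
    using almost_block_subsequence[OF coord_diff total_diff eps(1) eventually_True, where start = start]
    by blast
  define U where "U j = proj_on (block p j) (X (n j) - C)" for j
  interpret block_perturbation "\<lambda>j. X (n j)" C U p \<delta> \<epsilon> K
  proof
    show "Rep_james (U j) k = 0" if "k \<notin> block p j" for j k
      using that by (simp add: U_def Rep_proj_on_apply nat_convex_block)
    show "norm (U j) \<le> K" for j
      unfolding U_def using order_trans[OF norm_proj_on_le[OF nat_convex_block] K] .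
    show "norm (proj_on {p 0..} C) \<le> \<epsilon>" using start blocks(2) by simp
  qed (use blocks(1) close total_U eps(1) in \<open>simp_all add: U_def\<close>)
  have "upper_const \<le> Cb" unfolding upper_const_def Cb_def using eps(2) by simp
  then have "16 * upper_const * \<epsilon> \<le> 16 * Cb * \<epsilon>"
    using eps(1) by (intro mult_right_mono) simp_all
  moreover have "16 * Cb * \<epsilon> + \<epsilon> \<le> \<delta>^2" using eps(4) by (simp add: algebra_simps)
  ultimately interpret small_block_perturbation "\<lambda>j. X (n j)" C U p \<delta> \<epsilon> K
    using eps(1,3) \<delta> by unfold_locales linarith+
  show ?thesis by (rule that[OF n equiv_unit_basis complemented_closed_span])
qed

theorem mainTheorem15:
  fixes xs :: "nat \<Rightarrow> nat \<Rightarrow> real"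
  assumes "nontriv_weakly_cauchy xs"
  shows "\<exists>n. strict_mono n \<and> equiv_unit_basis (xs \<circ> n) \<and> complemented (closed_span (xs \<circ> n))"
proof -
  obtain \<phi> where xs: "\<And>n. xs n \<in> James" and conv: "\<And>f. f \<in> jdual \<Longrightarrow> (\<lambda>n. f (xs n)) \<longlonglongrightarrow> \<phi> f"
    and nontrivial: "\<not> (\<exists>x\<in>James. \<forall>f\<in>jdual. \<phi> f = f x)"
    using assms unfolding nontriv_weakly_cauchy_def by blast
  define X where "X n = Abs_james (xs n)" for n
  have Rep_X: "Rep_james (X n) = xs n" for n by (simp add: X_def Abs_james_inverse xs)
  have conv_X: "(\<lambda>n. g (X n)) \<longlonglongrightarrow> \<phi> (\<lambda>z. g (Abs_james z))" if "bounded_linear g" for g :: "james \<Rightarrow> real"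
    using conv[OF bounded_linear_in_jdual[OF that]] by (simp add: X_def)
  have "convergent (\<lambda>n. g (X n))" if "bounded_linear g" for g :: "james \<Rightarrow> real"
    using conv_X[OF that] by (rule convergentI)
  from weakly_cauchy_coordinatewise_limit[where X = X, OF this]
  obtain C M where C: "\<And>k. (\<lambda>n. Rep_james (X n) k) \<longlonglongrightarrow> Rep_james C k" and M: "\<And>n. norm (X n) \<le> M"
    by blast
  define \<delta> where "\<delta> = \<phi> (\<lambda>z. total_sum (Abs_james z)) - total_sum C"
  have total: "(\<lambda>n. total_sum (X n)) \<longlonglongrightarrow> total_sum C + \<delta>"
    using conv_X[OF bounded_linear_total_sum] by (simp add: \<delta>_def)
  have "\<delta> \<noteq> 0"
  proof
    assume "\<delta> = 0"
    have "\<phi> f = f (Rep_james C)" if "f \<in> jdual" for f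
      using weak_limit_eq_if_total_sum_converges[OF C M _ jdual_bounded_linear[OF that]] total \<open>\<delta> = 0\<close>
        conv[OF that] by (simp add: Rep_X)
    then show False using nontrivial Rep_james_in_James by blast
  qed
  then obtain n where "strict_mono n" "equiv_unit_basis (\<lambda>j. Rep_james (X (n j)))"
    "complemented (closed_span (\<lambda>j. Rep_james (X (n j))))"
    by (rule block_perturbation_subsequence[OF C M total])
  then show ?thesis by (intro exI[of _ n]) (simp add: Rep_X comp_def)
qed

end
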